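(* Let $r\ge3$, $\ell\ge1$ and $n\ge 3r-4$ (with $n\ge 2\ell+1$). A semi-valid tuple $C$ of length $2\ell+1$ in $\Omega_n$ satisfies $$|H_n^{(r)}(C)|=\min_{C'}|H_n^{(r)}(C')|,$$ the minimum over all semi-valid tuples $C'$ of length $2\ell+1$ in $\Omega_n$, if and only if there exists $i$ such that $C$ is $(i,2\ell+1)$-consecutive.
   Context: $\Omega_n=\{v_0,\dots,v_{n-1}\}$ with cyclic order $v_0<\dots<v_{n-1}<v_0$, indices of $v$ mod $n$. For distinct vertices $u,w$, $(u,w)$ is the set of vertices strictly between $u$ and $w$ moving clockwise from $u$ to $w$, and $[u,w]=(u,w)\cup\{u,w\}$. A tuple $C=(w_1,\dots,w_{2\ell+1})$ of distinct vertices is semi-valid if $w_1<w_3<\dots<w_{2\ell+1}<w_2<w_4<\dots<w_{2\ell}<w_1$ in clockwise cyclic order; indices of the $w$'s are mod $2\ell+1$. $H_n^{(r)}(C)=\{e\in\binom{\Omega_n}{r}: e\cap[w_p,w_{p-1}]\neq\emptyset\ \forall p\in\{1,\dots,2\ell+1\}\}$. $C$ is $(i,k)$-consecutive if there is $j$ with $w_{i+2s}=v_{j+s}$ for all $0\le s<k$. *)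

theory Defs
  imports Main
begin

text \<open>Vertices of Omega_n are the naturals 0..n-1 (v_i = i, indices mod n).
  A tuple C = (w_1,...,w_m) is a list of length m; w_p = C ! ((p - 1) mod m),
  i.e. 1-based indices taken modulo m.\<close>

definition wi :: "nat list \<Rightarrow> int \<Rightarrow> nat" where
  "wi C p = C ! nat ((p - 1) mod int (length C))"

definition cyc_ordered :: "nat list \<Rightarrow> bool" where
  "cyc_ordered xs \<longleftrightarrow> (\<exists>k. sorted_wrt (<) (rotate k xs))"

definition semi_valid :: "nat \<Rightarrow> nat \<Rightarrow> nat list \<Rightarrow> bool" where
  "semi_valid n l C \<longleftrightarrow> length C = 2*l+1 \<and> distinct C \<and> set C \<subseteq> {0..<n} \<and>
     cyc_ordered (map (\<lambda>s. wi C (2*int s + 1)) [0..<l+1] @ map (\<lambda>s. wi C (2*int s + 2)) [0..<l])"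

text \<open>Closed clockwise interval [u,w] in Omega_n: u, u+1, ..., w (mod n).\<close>
definition cint :: "nat \<Rightarrow> nat \<Rightarrow> nat \<Rightarrow> nat set" where
  "cint n u w = {(u + t) mod n | t. t \<le> (w + n - u) mod n}"

definition H :: "nat \<Rightarrow> nat \<Rightarrow> nat list \<Rightarrow> nat set set" where
  "H n r C = {e. e \<subseteq> {0..<n} \<and> card e = r \<and>
      (\<forall>p\<in>{1..int (length C)}. e \<inter> cint n (wi C p) (wi C (p - 1)) \<noteq> {})}"

definition consecutive :: "nat \<Rightarrow> nat list \<Rightarrow> int \<Rightarrow> nat \<Rightarrow> bool" where
  "consecutive n C i k \<longleftrightarrow> (\<exists>j::nat. \<forall>s<k. wi C (i + 2 * int s) = (j + s) mod n)"

end

theory Submission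
  imports Defs
begin

text \<open>Call the clockwise arc from a point of the tuple to the point \<open>l\<close> places further on a
  cover arc, so that \<open>H\<close> consists of the \<open>r\<close>-sets meeting all \<open>2l + 1\<close> cover arcs. An \<open>r\<close>-set
  missing a cover arc has a maximal gap (a run of non-elements with elements at both ends)
  containing it, hence containing more than half of the points; conversely every such heavy
  window contains a cover arc. Two heavy windows share a point, which makes the heavy maximal
  gap unique, so the \<open>r\<close>-sets outside \<open>H\<close> number \<open>\<Sum>\<^sub>k h(k) (n-2-k choose r-2)\<close>, where \<open>h(k)\<close>
  counts the heavy windows of length \<open>k\<close>. Here \<open>h(k) = 0\<close> for \<open>k \<le> l\<close>, \<open>h(k) \<le> k\<close> for \<open>2k \<le> n\<close>
  since heavy windows pairwise overlap, and \<open>h(k) + h(n-k) = n\<close> by complementation, whereas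
  \<open>h(k) \<ge> k\<close> for all \<open>k > l\<close> when the points form an arc. Pairing \<open>k\<close> with \<open>n - k\<close> shows that
  the sum is largest exactly for arcs, strictly so at \<open>k = l + 1\<close> once \<open>n \<ge> 3r - 4\<close>; and the
  semi-valid tuples whose points form an arc are the consecutive ones.\<close>

section \<open>Clockwise distance\<close>

definition cdist :: "nat \<Rightarrow> nat \<Rightarrow> nat \<Rightarrow> nat" where
  "cdist n u w = (w + n - u) mod n"

lemma cdist_less: "0 < n \<Longrightarrow> cdist n u w < n"
  by (simp add: cdist_def)

lemma add_cdist_mod:
  assumes "u < n" "w < n"
  shows "(u + cdist n u w) mod n = w"
proof -
  have "(u + cdist n u w) mod n = (u + (w + n - u)) mod n"
    unfolding cdist_def by (simp add: mod_add_right_eq)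
  also have "u + (w + n - u) = w + n" using assms by simp
  finally show ?thesis using assms by simp
qed

lemma cdist_add_mod:
  assumes "u < n" "t < n"
  shows "cdist n u ((u + t) mod n) = t"
proof (cases "u + t < n")
  case True
  then show ?thesis unfolding cdist_def using assms by simp
next
  case False
  then have "(u + t) mod n + n - u = t" using assms by (simp add: mod_if)
  then show ?thesis unfolding cdist_def using assms by simp
qed

lemma cdist_self [simp]: "cdist n u u = 0"
  by (simp add: cdist_def)

lemma cdist_eq_0_iff: "u < n \<Longrightarrow> w < n \<Longrightarrow> cdist n u w = 0 \<longleftrightarrow> w = u"
  by (metis add.right_neutral mod_less add_cdist_mod cdist_self)

lemma cdist_inj: "u < n \<Longrightarrow> w < n \<Longrightarrow> z < n \<Longrightarrow> cdist n u w = cdist n u z \<Longrightarrow> w = z"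
  by (metis add_cdist_mod)

lemma mod_add_right_cancel_less:
  fixes x y n k :: nat
  assumes "x < n" "y < n" "(x + k) mod n = (y + k) mod n"
  shows "x = y"
  by (metis assms add.commute cdist_add_mod mod_add_right_eq mod_less_divisor
      gr_implies_not0 not_gr_zero)

lemma cdist_trans_le:
  assumes "u < n" "w < n" "z < n" "cdist n u w \<le> cdist n u z"
  shows "cdist n w z = cdist n u z - cdist n u w"
proof -
  let ?d = "cdist n u z - cdist n u w"
  have "(w + ?d) mod n = (u + cdist n u w + ?d) mod n"
    using add_cdist_mod assms by (metis mod_add_left_eq)
  also have "u + cdist n u w + ?d = u + cdist n u z" using assms(4) by simp
  finally have "(w + ?d) mod n = z" using add_cdist_mod assms by simp
  moreover have "?d < n" using cdist_less[of n u z] assms by simp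
  ultimately show ?thesis using cdist_add_mod[of w n ?d] assms by simp
qed

lemma cdist_trans_gt:
  assumes "u < n" "w < n" "z < n" "cdist n u z < cdist n u w"
  shows "cdist n w z = n - (cdist n u w - cdist n u z)"
proof -
  let ?d = "n - (cdist n u w - cdist n u z)"
  have lt: "cdist n u w < n" using cdist_less assms by auto
  have "(w + ?d) mod n = (u + cdist n u w + ?d) mod n"
    using add_cdist_mod assms by (metis mod_add_left_eq)
  also have "u + cdist n u w + ?d = (u + cdist n u z) + n" using assms(4) lt by simp
  finally have "(w + ?d) mod n = z" using add_cdist_mod assms by simp
  moreover have "?d < n" using assms(4) lt by linarith
  ultimately show ?thesis using cdist_add_mod[of w n ?d] assms by simp
qed

lemma cdist_add:
  assumes "u < n" "w < n" "x < n" "cdist n u w + cdist n w x < n"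
  shows "cdist n u x = cdist n u w + cdist n w x"
proof -
  have "(u + (cdist n u w + cdist n w x)) mod n = ((u + cdist n u w) mod n + cdist n w x) mod n"
    by (simp add: mod_add_left_eq add.assoc)
  also have "\<dots> = x" using add_cdist_mod assms by simp
  finally show ?thesis using cdist_add_mod[OF assms(1,4)] by simp
qed

lemma cdist_shift:
  assumes "u < n" "x < n" "d \<le> n"
  shows "cdist n ((u + d) mod n) x = (cdist n u x + (n - d)) mod n"
proof -
  let ?c = "(cdist n u x + (n - d)) mod n"
  have "((u + d) mod n + ?c) mod n = (u + d + (cdist n u x + (n - d))) mod n"
    by (rule mod_add_eq)
  also have "u + d + (cdist n u x + (n - d)) = (u + cdist n u x) + n" using assms(3) by simp
  also have "(u + cdist n u x + n) mod n = x" using add_cdist_mod[OF assms(1,2)] by simp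
  finally show ?thesis using cdist_add_mod[of "(u + d) mod n" n ?c] assms(1) by simp
qed

lemma cint_eq_cdist:
  assumes "u < n" "w < n"
  shows "cint n u w = {x. x < n \<and> cdist n u x \<le> cdist n u w}"
proof
  show "cint n u w \<subseteq> {x. x < n \<and> cdist n u x \<le> cdist n u w}"
  proof
    fix x assume "x \<in> cint n u w"
    then obtain t where t: "x = (u + t) mod n" "t \<le> cdist n u w"
      unfolding cint_def cdist_def by auto
    have "t < n" using t(2) cdist_less[of n u w] assms by simp
    then show "x \<in> {x. x < n \<and> cdist n u x \<le> cdist n u w}"
      using cdist_add_mod[OF assms(1)] t assms by simp
  qed
  show "{x. x < n \<and> cdist n u x \<le> cdist n u w} \<subseteq> cint n u w"
  proof
    fix x assume x: "x \<in> {x. x < n \<and> cdist n u x \<le> cdist n u w}"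
    then have "x = (u + cdist n u x) mod n" using add_cdist_mod assms by simp
    then show "x \<in> cint n u w" using x unfolding cint_def cdist_def by auto
  qed
qed

lemma card_arc:
  assumes "m \<le> n"
  shows "card {(j + s) mod n | s. s < m} = m"
proof -
  have "inj_on (\<lambda>s. (j + s) mod n) {..<m}"
  proof (rule inj_onI)
    fix x y assume "x \<in> {..<m}" "y \<in> {..<m}" "(j + x) mod n = (j + y) mod n"
    then show "x = y" using mod_add_right_cancel_less[of x n y j] assms by (simp add: add.commute)
  qed
  moreover have "{(j + s) mod n | s. s < m} = (\<lambda>s. (j + s) mod n) ` {..<m}" by auto
  ultimately show ?thesis by (simp add: card_image)
qed

lemma all_mem_if_closed_pred:
  fixes x y n :: nat
  assumes "x \<in> X" "x < n" "\<And>s. s \<in> X \<Longrightarrow> (s + (n - 1)) mod n \<in> X" "y < n"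
  shows "y \<in> X"
proof -
  have all: "(x + n - t) mod n \<in> X" if "t \<le> n" for t
    using that
  proof (induction t)
    case 0
    then show ?case using assms(1,2) by simp
  next
    case (Suc t)
    then have "((x + n - t) mod n + (n - 1)) mod n \<in> X" using assms(3) by simp
    moreover have "((x + n - t) mod n + (n - 1)) mod n = (x + n - t + (n - 1)) mod n"
      by (simp add: mod_add_left_eq)
    moreover have "x + n - t + (n - 1) = x + n - Suc t + n" using Suc.prems by simp
    ultimately show ?case by simp
  qed
  have "(x + n - (x + n - y) mod n) mod n = y"
    using assms(2,4) by (cases "y \<le> x") (auto simp: mod_if)
  then show ?thesis using all[of "(x + n - y) mod n"] assms(4) by simp
qed

section \<open>Heavy windows\<close>

definition window :: "nat \<Rightarrow> nat \<Rightarrow> nat \<Rightarrow> nat set" where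
  "window n b k = {w. w < n \<and> cdist n b w < k}"

definition heavy :: "nat set \<Rightarrow> nat \<Rightarrow> nat \<Rightarrow> nat \<Rightarrow> bool" where
  "heavy W n b k \<longleftrightarrow> card W < 2 * card (window n b k \<inter> W)"

definition heavy_count :: "nat set \<Rightarrow> nat \<Rightarrow> nat \<Rightarrow> nat" where
  "heavy_count W n k = card {b. b < n \<and> heavy W n b k}"

definition is_arc :: "nat \<Rightarrow> nat \<Rightarrow> nat set \<Rightarrow> bool" where
  "is_arc n m W \<longleftrightarrow> (\<exists>j. W = {(j + s) mod n | s. s < m})"

lemma finite_window [simp]: "finite (window n b k)"
  unfolding window_def by (rule finite_subset[of _ "{..<n}"]) auto

lemma window_subset_image:
  assumes "b < n"
  shows "window n b k \<subseteq> (\<lambda>t. (b + t) mod n) ` {..<k}"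
proof
  fix w assume "w \<in> window n b k"
  then have "w < n" "cdist n b w < k" by (auto simp: window_def)
  then show "w \<in> (\<lambda>t. (b + t) mod n) ` {..<k}"
    using add_cdist_mod[OF assms] by (intro image_eqI[of _ _ "cdist n b w"]) auto
qed

lemma window_eq_image:
  assumes "b < n" "k \<le> n"
  shows "window n b k = (\<lambda>t. (b + t) mod n) ` {..<k}"
proof
  show "window n b k \<subseteq> (\<lambda>t. (b + t) mod n) ` {..<k}" using window_subset_image assms by simp
  show "(\<lambda>t. (b + t) mod n) ` {..<k} \<subseteq> window n b k"
    using cdist_add_mod[OF assms(1)] assms by (auto simp: window_def)
qed

lemma card_window:
  assumes "b < n" "k \<le> n"
  shows "card (window n b k) = k"
proof -
  have "inj_on (\<lambda>t. (b + t) mod n) {..<k}"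
  proof (rule inj_onI)
    fix x y assume "x \<in> {..<k}" "y \<in> {..<k}" "(b + x) mod n = (b + y) mod n"
    then show "x = y" using mod_add_right_cancel_less[of x n y b] assms by (simp add: add.commute)
  qed
  then show ?thesis using window_eq_image[OF assms] by (simp add: card_image)
qed

lemma card_window_le:
  assumes "b < n"
  shows "card (window n b k) \<le> k"
proof -
  have "card (window n b k) \<le> card ((\<lambda>t. (b + t) mod n) ` {..<k})"
    using window_subset_image[OF assms] by (intro card_mono) auto
  also have "\<dots> \<le> k" using card_image_le[of "{..<k}"] by simp
  finally show ?thesis .
qed

lemma window_complement:
  assumes "b < n" "k \<le> n" "w < n"
  shows "w \<in> window n b k \<longleftrightarrow> w \<notin> window n ((b + k) mod n) (n - k)"
proof (cases "k = n")
  case True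
  then show ?thesis using assms cdist_less[of n b w] by (auto simp: window_def)
next
  case False
  define b' where "b' = (b + k) mod n"
  have b'n: "b' < n" using assms b'_def by simp
  have bb': "cdist n b b' = k" using cdist_add_mod[of b n k] assms False b'_def by simp
  show ?thesis
  proof (cases "k \<le> cdist n b w")
    case True
    then have "cdist n b' w = cdist n b w - k" using cdist_trans_le[of b n b' w] assms b'n bb' by simp
    moreover have "cdist n b w < n" using assms by (simp add: cdist_less)
    ultimately show ?thesis using True assms unfolding window_def b'_def[symmetric] by auto
  next
    case False
    then have "cdist n b' w = n - (k - cdist n b w)"
      using cdist_trans_gt[of b n b' w] assms b'n bb' by simp
    then show ?thesis using False assms unfolding window_def b'_def[symmetric] by auto
  qed
qed

lemma heavy_windows_meet:
  assumes "finite W" "heavy W n b k" "heavy W n b' k'"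
  shows "\<exists>w\<in>W. w \<in> window n b k \<and> w \<in> window n b' k'"
proof (rule ccontr)
  assume "\<not> ?thesis"
  then have "card (window n b k \<inter> W) + card (window n b' k' \<inter> W)
      = card ((window n b k \<inter> W) \<union> (window n b' k' \<inter> W))"
    using assms(1) by (subst card_Un_disjoint) auto
  also have "\<dots> \<le> card W" using assms(1) by (intro card_mono) auto
  finally show False using assms(2,3) unfolding heavy_def by linarith
qed

lemma heavy_windows_close:
  assumes "finite W" "b < n" "b' < n" "heavy W n b k" "heavy W n b' k"
  shows "cdist n b' b < k \<or> n - k < cdist n b' b"
proof -
  obtain w where w: "w < n" "cdist n b w < k" "cdist n b' w < k"
    using heavy_windows_meet[OF assms(1,4,5)] by (auto simp: window_def)
  show ?thesis
  proof (cases "cdist n b' b \<le> cdist n b' w")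
    case False
    then have "cdist n b w = n - (cdist n b' b - cdist n b' w)"
      using cdist_trans_gt[of b' n b w] assms w by simp
    then show ?thesis using cdist_less[of n b' b] assms w False by linarith
  qed (use w in linarith)
qed

lemma card_le_if_pairwise_close:
  assumes X: "X \<subseteq> {..<n}" and k: "2 * k \<le> n"
    and close: "\<And>x y. x \<in> X \<Longrightarrow> y \<in> X \<Longrightarrow> cdist n x y < k \<or> n - k < cdist n x y"
  shows "card X \<le> k"
proof (cases "X = {}")
  case False
  then obtain s where s: "s \<in> X" by auto
  have sn: "s < n" using s X by auto
  define \<phi> where "\<phi> y = (if cdist n s y < k then cdist n s y else cdist n s y + k - n)" for y
  have im: "\<phi> ` X \<subseteq> {..<k}"
  proof
    fix z assume "z \<in> \<phi> ` X"
    then obtain y where y: "y \<in> X" "z = \<phi> y" by auto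
    then show "z \<in> {..<k}" using close[OF s y(1)] cdist_less[of n s y] sn unfolding \<phi>_def by auto
  qed
  have cross: "y = y'"
    if y: "y \<in> X" "y' \<in> X" "cdist n s y < k" "\<not> cdist n s y' < k" "\<phi> y = \<phi> y'" for y y'
  proof -
    have yn: "y < n" "y' < n" using y X by auto
    have e: "cdist n s y = cdist n s y' + k - n" and gt: "n - k < cdist n s y'"
      using y close[OF s y(2)] unfolding \<phi>_def by auto
    then have "cdist n s y < cdist n s y'" using k cdist_less[of n s y'] sn by linarith
    then have "cdist n y' y = k"
      using cdist_trans_gt[OF sn yn(2) yn(1)] e gt cdist_less[of n s y'] sn k by linarith
    then show ?thesis using close[OF y(2) y(1)] k by linarith
  qed
  have "inj_on \<phi> X"
  proof (rule inj_onI)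
    fix y y' assume y: "y \<in> X" "y' \<in> X" "\<phi> y = \<phi> y'"
    then have yn: "y < n" "y' < n" using X by auto
    consider "cdist n s y < k" "cdist n s y' < k" | "\<not> cdist n s y < k" "\<not> cdist n s y' < k"
      | "cdist n s y < k" "\<not> cdist n s y' < k" | "\<not> cdist n s y < k" "cdist n s y' < k"
      by blast
    then show "y = y'"
    proof cases
      case 2
      then have "cdist n s y = cdist n s y'"
        using y close[OF s y(1)] close[OF s y(2)] k unfolding \<phi>_def by auto
      then show ?thesis using cdist_inj[OF sn yn] by simp
    qed (use cross[OF y(1,2)] cross[OF y(2,1)] y cdist_inj[OF sn yn] in \<open>auto simp: \<phi>_def\<close>)
  qed
  then have "card X = card (\<phi> ` X)" by (simp add: card_image)
  also have "\<dots> \<le> k" using card_mono[OF _ im] by simp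
  finally show ?thesis .
qed simp

lemma heavy_count_le:
  assumes "finite W" "2 * k \<le> n"
  shows "heavy_count W n k \<le> k"
  unfolding heavy_count_def
  by (rule card_le_if_pairwise_close) (use assms heavy_windows_close[OF assms(1)] in auto)

lemma heavy_count_eq_0:
  assumes "card W = 2*l+1" "k \<le> l"
  shows "heavy_count W n k = 0"
proof -
  have "\<not> heavy W n b k" if "b < n" for b
    using card_window_le[OF that, of k] card_mono[of "window n b k" "window n b k \<inter> W"] assms
    unfolding heavy_def by force
  then show ?thesis unfolding heavy_count_def by simp
qed

lemma heavy_complement:
  assumes W: "finite W" "W \<subseteq> {..<n}" "odd (card W)" and b: "b < n" "k \<le> n"
  shows "heavy W n b k \<longleftrightarrow> \<not> heavy W n ((b + k) mod n) (n - k)"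
proof -
  let ?A = "window n b k \<inter> W" and ?B = "window n ((b + k) mod n) (n - k) \<inter> W"
  have "?A \<inter> ?B = {}" "?A \<union> ?B = W" using window_complement[OF b] W by auto
  then have "card ?A + card ?B = card W" using W(1) by (metis card_Un_disjoint finite_Int)
  then show ?thesis using W(3) unfolding heavy_def by presburger
qed

lemma heavy_count_complement:
  assumes W: "finite W" "W \<subseteq> {..<n}" "odd (card W)" and k: "k \<le> n"
  shows "heavy_count W n k + heavy_count W n (n - k) = n"
proof -
  define g where "g b = (b + k) mod n" for b
  have n: "0 < n" using W card_mono[of "{..<n}" W] by (cases n) auto
  let ?L = "{b. b < n \<and> \<not> heavy W n b k}"
  have into: "g ` ?L \<subseteq> {b. b < n \<and> heavy W n b (n - k)}"
    using heavy_complement[OF W _ k] n unfolding g_def by auto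
  have onto: "{b. b < n \<and> heavy W n b (n - k)} \<subseteq> g ` ?L"
  proof
    fix b' assume b': "b' \<in> {b. b < n \<and> heavy W n b (n - k)}"
    define b where "b = (b' + (n - k)) mod n"
    have gb: "g b = b'" using b' k unfolding g_def b_def by (simp add: mod_add_left_eq)
    have "b < n" using n b_def by simp
    then show "b' \<in> g ` ?L" using heavy_complement[OF W _ k, of b] gb b' unfolding g_def by auto
  qed
  have "inj_on g ?L"
  proof (rule inj_onI)
    fix x y assume "x \<in> ?L" "y \<in> ?L" "g x = g y"
    then show "x = y" using mod_add_right_cancel_less[of x n y k] unfolding g_def by simp
  qed
  then have "heavy_count W n (n - k) = card ?L"
    unfolding heavy_count_def subset_antisym[OF onto into] by (rule card_image)
  moreover have "card ?L + heavy_count W n k = n"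
  proof -
    have "?L \<union> {b. b < n \<and> heavy W n b k} = {..<n}" by auto
    moreover have "?L \<inter> {b. b < n \<and> heavy W n b k} = {}" by auto
    ultimately show ?thesis unfolding heavy_count_def
      by (metis card_Un_disjoint card_lessThan finite_Collect_conjI finite_Collect_less_nat)
  qed
  ultimately show ?thesis by linarith
qed

text \<open>The window of length \<open>k\<close> ending \<open>i\<close> steps after the middle point \<open>j + l\<close> of the arc
  contains the \<open>l + 1\<close> consecutive arc points starting at \<open>j + min i l\<close>.\<close>

lemma heavy_window_of_arc:
  assumes n: "2*l+1 \<le> n" and k: "l+1 \<le> k" "k \<le> n" and i: "i < k"
  shows "heavy {(j + s) mod n | s. s < 2*l+1} n ((j + l + 1 + (n - k) + i) mod n) k"
proof -
  define B where "B = {(j + s) mod n | s. s < 2*l+1}"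
  define b where "b = (j + l + 1 + (n - k) + i) mod n"
  define lo where "lo = min i l"
  define P where "P = (\<lambda>s. (j + s) mod n) ` {lo..lo+l}"
  have bn: "b < n" using n b_def by simp
  have "P \<subseteq> window n b k"
  proof
    fix p assume "p \<in> P"
    then obtain s where s: "lo \<le> s" "s \<le> lo + l" "p = (j + s) mod n" unfolding P_def by auto
    define t where "t = s + k - (l + 1 + i)"
    have t: "l + 1 + i \<le> s + k" "t < k" using s k i unfolding t_def lo_def by auto
    have "(b + t) mod n = (j + l + 1 + (n - k) + i + t) mod n" unfolding b_def by (simp add: mod_add_left_eq)
    also have "j + l + 1 + (n - k) + i + t = (j + s) + n" using t k unfolding t_def by simp
    finally have "(b + t) mod n = p" using s by simp
    then have "cdist n b p = t" using cdist_add_mod[OF bn, of t] t k s by simp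
    then show "p \<in> window n b k" using t s n unfolding window_def by simp
  qed
  moreover have "P \<subseteq> B"
  proof
    fix p assume "p \<in> P"
    then obtain s where "s \<le> lo + l" "p = (j + s) mod n" unfolding P_def by auto
    moreover have "lo + l < 2*l+1" unfolding lo_def by simp
    ultimately show "p \<in> B" unfolding B_def by auto
  qed
  moreover have "card P = l + 1"
  proof -
    have "lo + l < n" using n unfolding lo_def by simp
    then have "inj_on (\<lambda>s. (j + s) mod n) {lo..lo+l}"
      by (intro inj_onI) (metis add.commute atLeastAtMost_iff le_less_trans mod_add_right_cancel_less)
    then show ?thesis unfolding P_def by (simp add: card_image)
  qed
  ultimately have "l + 1 \<le> card (window n b k \<inter> B)"
    by (metis card_mono finite_Int finite_window le_inf_iff)
  then show ?thesis using card_arc[OF n, of j] unfolding heavy_def B_def b_def by linarith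
qed

lemma heavy_count_arc_ge:
  assumes n: "2*l+1 \<le> n" and k: "l+1 \<le> k" "k \<le> n"
  shows "k \<le> heavy_count {(j + s) mod n | s. s < 2*l+1} n k"
proof -
  define c where "c = j + l + 1 + (n - k)"
  define b where "b i = (c + i) mod n" for i
  have "inj_on b {..<k}"
  proof (rule inj_onI)
    fix x y assume "x \<in> {..<k}" "y \<in> {..<k}" "b x = b y"
    then show "x = y" using mod_add_right_cancel_less[of x n y c] k unfolding b_def by (simp add: add.commute)
  qed
  then have "k = card (b ` {..<k})" by (simp add: card_image)
  also have "\<dots> \<le> heavy_count {(j + s) mod n | s. s < 2*l+1} n k"
    unfolding heavy_count_def using heavy_window_of_arc[OF n k] n
    by (intro card_mono) (auto simp: b_def c_def)
  finally show ?thesis .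
qed

lemma heavy_iff_window_subset:
  assumes "finite W" "card W = 2*l+1" "b < n" "l + 1 \<le> n"
  shows "heavy W n b (l+1) \<longleftrightarrow> window n b (l+1) \<subseteq> W"
proof -
  have cw: "card (window n b (l+1)) = l+1" using card_window assms by simp
  have le: "card (window n b (l+1) \<inter> W) \<le> l+1"
    using cw card_mono[OF finite_window Int_lower1, of n b "l+1" W] by simp
  show ?thesis
  proof
    assume "heavy W n b (l+1)"
    then have "card (window n b (l+1) \<inter> W) = card (window n b (l+1))"
      using le cw assms unfolding heavy_def by linarith
    then have "window n b (l+1) \<inter> W = window n b (l+1)"
      by (metis card_subset_eq finite_window inf_le1)
    then show "window n b (l+1) \<subseteq> W" by blast
  next
    assume "window n b (l+1) \<subseteq> W"
    then show "heavy W n b (l+1)" using cw assms unfolding heavy_def by (simp add: Int_absorb2)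
  qed
qed

lemma window_pred_subset:
  assumes "s < n" "2 \<le> n" "window n s k \<subseteq> W" "(s + (n - 1)) mod n \<in> W"
  shows "window n ((s + (n - 1)) mod n) k \<subseteq> W"
proof
  define s' where "s' = (s + (n - 1)) mod n"
  fix w assume w: "w \<in> window n ((s + (n - 1)) mod n) k"
  then have wn: "w < n" and ws': "cdist n s' w < k" unfolding window_def s'_def by auto
  have s'n: "s' < n" unfolding s'_def using assms by simp
  have "(s' + 1) mod n = (s + (n - 1) + 1) mod n" unfolding s'_def by (metis mod_add_left_eq)
  also have "s + (n - 1) + 1 = s + n" using assms by simp
  finally have "(s' + 1) mod n = s" using assms by simp
  then have s's: "cdist n s' s = 1" using cdist_add_mod[OF s'n, of 1] assms by simp
  show "w \<in> W"
  proof (cases "w = s'")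
    case False
    then have "cdist n s' s \<le> cdist n s' w" using s's cdist_eq_0_iff[OF s'n wn] by linarith
    then have "cdist n s w < k" using cdist_trans_le[OF s'n assms(1) wn] s's ws' by simp
    then show ?thesis using assms(3) wn unfolding window_def by auto
  qed (use assms(4) s'_def in simp)
qed

lemma heavy_subset_window_if_pred_notin:
  assumes W: "finite W" "card W = 2*l+1" and n: "2*l+1 \<le> n"
    and s: "s < n" "heavy W n s (l+1)" and s'W: "(s + (n - 1)) mod n \<notin> W"
  shows "{b. b < n \<and> heavy W n b (l+1)} \<subseteq> window n s (l+1)"
proof
  define s' where "s' = (s + (n - 1)) mod n"
  have s'n: "s' < n" unfolding s'_def using s by simp
  have ss': "cdist n s s' = n - 1" unfolding s'_def using cdist_add_mod[OF s(1), of "n - 1"] s by simp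
  fix y assume "y \<in> {b. b < n \<and> heavy W n b (l+1)}"
  then have y: "y < n" "heavy W n y (l+1)" by auto
  have "\<not> n - (l+1) < cdist n s y"
  proof
    assume far: "n - (l+1) < cdist n s y"
    have "cdist n s y \<le> cdist n s s'" using ss' cdist_less[of n s y] s by simp
    then have "cdist n y s' = cdist n s s' - cdist n s y" using cdist_trans_le[OF s(1) y(1) s'n] by simp
    then have "s' \<in> window n y (l+1)" using far ss' s'n unfolding window_def by auto
    then show False using y heavy_iff_window_subset[OF W y(1)] n s'W s'_def by auto
  qed
  then show "y \<in> window n s (l+1)"
    using heavy_windows_close[OF W(1) y(1) s(1) y(2) s(2)] y unfolding window_def by auto
qed

lemma arc_subset_if_windows_subset:
  assumes "s < n" "k \<le> n" "\<And>t. t < k \<Longrightarrow> window n ((s + t) mod n) k \<subseteq> W"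
  shows "{(s + t) mod n | t. t < 2*k - 1} \<subseteq> W"
proof clarify
  fix t assume t: "t < 2*k - 1"
  define t1 where "t1 = min t (k - 1)"
  define b where "b = (s + t1) mod n"
  have "t1 < k" "t - t1 < k" using t unfolding t1_def by auto
  have "(b + (t - t1)) mod n = (s + t1 + (t - t1)) mod n"
    unfolding b_def by (simp add: mod_add_left_eq)
  also have "s + t1 + (t - t1) = s + t" unfolding t1_def by simp
  finally have "(b + (t - t1)) mod n = (s + t) mod n" .
  then have "cdist n b ((s + t) mod n) = t - t1"
    using cdist_add_mod[of b n "t - t1"] \<open>t - t1 < k\<close> assms(1,2) unfolding b_def by simp
  then have "(s + t) mod n \<in> window n b k"
    using \<open>t - t1 < k\<close> assms(1) unfolding window_def by simp
  then show "(s + t) mod n \<in> W" using assms(3)[OF \<open>t1 < k\<close>] unfolding b_def by blast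
qed

lemma is_arc_of_heavy_count:
  assumes W: "finite W" "W \<subseteq> {..<n}" "card W = 2*l+1" and l: "1 \<le> l"
    and count: "l+1 \<le> heavy_count W n (l+1)"
  shows "is_arc n (2*l+1) W"
proof -
  define X where "X = {b. b < n \<and> heavy W n b (l+1)}"
  have n: "2*l+1 \<le> n" using card_mono[of "{..<n}" W] W by simp
  have X: "b \<in> X \<longleftrightarrow> b < n \<and> window n b (l+1) \<subseteq> W" for b
    unfolding X_def using heavy_iff_window_subset[OF W(1,3), of b n] n by auto
  have cardX: "l+1 \<le> card X" using count unfolding X_def heavy_count_def .
  show ?thesis
  proof (cases "\<forall>s\<in>X. (s + (n - 1)) mod n \<in> X")
    case True
    obtain x where "x \<in> X" using cardX by fastforce
    then have "window n y (l+1) \<subseteq> W" if "y < n" for y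
      using all_mem_if_closed_pred[of x X n y] True X that by blast
    then have "W = {..<n}" using W(2) unfolding window_def by fastforce
    then have "W = {(0 + s) mod n | s. s < 2*l+1}" using W(3) by (auto, rule_tac x=x in exI, simp)
    then show ?thesis unfolding is_arc_def by blast
  next
    case False
    then obtain s where s: "s \<in> X" and "(s + (n - 1)) mod n \<notin> X" by blast
    then have "(s + (n - 1)) mod n \<notin> W"
      using window_pred_subset[of s n "l+1" W] X n l by auto
    then have "X \<subseteq> window n s (l+1)"
      using heavy_subset_window_if_pred_notin[OF W(1,3) n] s unfolding X_def by auto
    moreover have "card (window n s (l+1)) \<le> card X"
      using card_window[of s n "l+1"] cardX s X n by simp
    ultimately have Xw: "X = window n s (l+1)"
      using card_subset_eq[OF finite_window] card_mono[OF finite_window] by (metis le_antisym)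
    have sn: "s < n" using s X by simp
    have "window n ((s + t) mod n) (l+1) \<subseteq> W" if "t < l+1" for t
    proof -
      have "(s + t) mod n \<in> window n s (l+1)"
        using cdist_add_mod[OF sn, of t] sn n that unfolding window_def by simp
      then show ?thesis using Xw X by blast
    qed
    then have "{(s + t) mod n | t. t < 2*l+1} \<subseteq> W"
      using arc_subset_if_windows_subset[of s n "l+1" W] s X n by simp
    moreover have "card {(s + t) mod n | t. t < 2*l+1} = card W" using card_arc[OF n] W(3) by simp
    ultimately have "{(s + t) mod n | t. t < 2*l+1} = W" using card_subset_eq[OF W(1)] by blast
    then show ?thesis unfolding is_arc_def by (intro exI[of _ s]) simp
  qed
qed

lemma is_arc_if_small:
  assumes W: "W \<subseteq> {..<n}" "card W = 2*l+1" and l: "1 \<le> l" and n: "n \<le> 2*l+2"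
  shows "is_arc n (2*l+1) W"
proof -
  have fW: "finite W" using W(1) by (rule finite_subset) simp
  have nge: "2*l+1 \<le> n" using card_mono[OF _ W(1)] W(2) by simp
  have compl: "heavy_count W n k + heavy_count W n (n - k) = n" if "k \<le> n" for k
    using heavy_count_complement[OF fW W(1)] W(2) that by simp
  have "l + 1 \<le> heavy_count W n (l+1)"
  proof (cases "n = 2*l+1")
    case True
    then show ?thesis using compl[of l] heavy_count_eq_0[OF W(2), of l n] by simp
  next
    case False
    then have "n = 2*l+2" using n nge by simp
    then show ?thesis using compl[of "l+1"] by simp
  qed
  then show ?thesis using is_arc_of_heavy_count[OF fW W l] by simp
qed

section \<open>Comparing weighted sums\<close>

lemma double_sum_reflect:
  fixes f c :: "nat \<Rightarrow> nat"
  assumes sym: "\<And>k. k \<le> n \<Longrightarrow> c k + c (n - k) = n"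
  shows "2 * (\<Sum>k=0..n. int (f k) * int (c k))
       = (\<Sum>k=0..n. (int (f k) - int (f (n - k))) * int (c k)) + (\<Sum>k=0..n. int n * int (f (n - k)))"
proof -
  have "(\<Sum>k=0..n. int (f k) * int (c k)) = (\<Sum>k=0..n. int (f (n - k)) * int (c (n - k)))"
    using sum.atLeastAtMost_rev[of "\<lambda>k. int (f k) * int (c k)" 0 n] by simp
  also have "\<dots> = (\<Sum>k=0..n. int (f (n - k)) * (int n - int (c k)))"
  proof (rule sum.cong)
    fix k assume "k \<in> {0..n}"
    then have "int (c (n - k)) = int n - int (c k)" using sym[of k] by simp
    then show "int (f (n - k)) * int (c (n - k)) = int (f (n - k)) * (int n - int (c k))" by simp
  qed simp
  finally have "2 * (\<Sum>k=0..n. int (f k) * int (c k))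
      = (\<Sum>k=0..n. int (f k) * int (c k) + int (f (n - k)) * (int n - int (c k)))"
    by (simp add: sum.distrib)
  also have "\<dots> = (\<Sum>k=0..n. (int (f k) - int (f (n - k))) * int (c k) + int n * int (f (n - k)))"
    by (rule sum.cong) (auto simp: algebra_simps)
  finally show ?thesis by (simp add: sum.distrib)
qed

lemma weighted_sum_diff:
  fixes f cW cB :: "nat \<Rightarrow> nat"
  assumes fz: "\<And>k. n - 1 \<le> k \<Longrightarrow> f k = 0"
    and symW: "\<And>k. k \<le> n \<Longrightarrow> cW k + cW (n - k) = n"
    and symB: "\<And>k. k \<le> n \<Longrightarrow> cB k + cB (n - k) = n"
  shows "2 * int (\<Sum>k<n-1. cW k * f k) - 2 * int (\<Sum>k<n-1. cB k * f k)
       = (\<Sum>k=0..n. (int (f k) - int (f (n - k))) * (int (cW k) - int (cB k)))"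
proof -
  have ext: "int (\<Sum>k<n-1. c k * f k) = (\<Sum>k=0..n. int (f k) * int (c k))" for c
  proof -
    have "(\<Sum>k<n-1. c k * f k) = (\<Sum>k=0..n. c k * f k)"
      by (rule sum.mono_neutral_left) (auto simp: fz)
    then show ?thesis by (simp add: algebra_simps)
  qed
  have "(\<Sum>k=0..n. (int (f k) - int (f (n - k))) * (int (cW k) - int (cB k)))
      = (\<Sum>k=0..n. (int (f k) - int (f (n - k))) * int (cW k))
        - (\<Sum>k=0..n. (int (f k) - int (f (n - k))) * int (cB k))"
    unfolding sum_subtractf[symmetric] by (rule sum.cong) (auto simp: algebra_simps)
  then show ?thesis
    using double_sum_reflect[of n cW f, OF symW] double_sum_reflect[of n cB f, OF symB]
    unfolding ext by linarith
qed

lemma reflected_term_nonpos: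
  fixes f cW cB :: "nat \<Rightarrow> nat"
  assumes fmono: "\<And>k. 2 * k \<le> n \<Longrightarrow> f (n - k) \<le> f k"
    and symW: "\<And>k. k \<le> n \<Longrightarrow> cW k + cW (n - k) = n"
    and symB: "\<And>k. k \<le> n \<Longrightarrow> cB k + cB (n - k) = n"
    and le: "\<And>k. 2 * k \<le> n \<Longrightarrow> cW k \<le> cB k"
    and k: "k \<le> n"
  shows "(int (f k) - int (f (n - k))) * (int (cW k) - int (cB k)) \<le> 0"
proof (cases "2 * k \<le> n")
  case True
  then show ?thesis using fmono[OF True] le[OF True] by (simp add: mult_nonneg_nonpos)
next
  case False
  then have h: "2 * (n - k) \<le> n" by simp
  have "f k \<le> f (n - k)" using fmono[OF h] k by simp
  moreover have "cB k \<le> cW k" using le[OF h] symW[OF k] symB[OF k] by simp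
  ultimately show ?thesis by (simp add: mult_nonpos_nonneg)
qed

lemma weighted_sum_le:
  fixes f cW cB :: "nat \<Rightarrow> nat"
  assumes fz: "\<And>k. n - 1 \<le> k \<Longrightarrow> f k = 0"
    and fmono: "\<And>k. 2 * k \<le> n \<Longrightarrow> f (n - k) \<le> f k"
    and symW: "\<And>k. k \<le> n \<Longrightarrow> cW k + cW (n - k) = n"
    and symB: "\<And>k. k \<le> n \<Longrightarrow> cB k + cB (n - k) = n"
    and le: "\<And>k. 2 * k \<le> n \<Longrightarrow> cW k \<le> cB k"
  shows "(\<Sum>k<n-1. cW k * f k) \<le> (\<Sum>k<n-1. cB k * f k)"
proof -
  have "(\<Sum>k=0..n. (int (f k) - int (f (n - k))) * (int (cW k) - int (cB k))) \<le> 0"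
    by (rule sum_nonpos) (use reflected_term_nonpos[of n f cW cB, OF fmono symW symB le] in simp)
  then show ?thesis using weighted_sum_diff[of n f cW cB, OF fz symW symB] by linarith
qed

lemma weighted_sum_less:
  fixes f cW cB :: "nat \<Rightarrow> nat"
  assumes fz: "\<And>k. n - 1 \<le> k \<Longrightarrow> f k = 0"
    and fmono: "\<And>k. 2 * k \<le> n \<Longrightarrow> f (n - k) \<le> f k"
    and symW: "\<And>k. k \<le> n \<Longrightarrow> cW k + cW (n - k) = n"
    and symB: "\<And>k. k \<le> n \<Longrightarrow> cB k + cB (n - k) = n"
    and le: "\<And>k. 2 * k \<le> n \<Longrightarrow> cW k \<le> cB k"
    and k0: "2 * k0 \<le> n" "cW k0 < cB k0" "f (n - k0) < f k0"
  shows "(\<Sum>k<n-1. cW k * f k) < (\<Sum>k<n-1. cB k * f k)"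
proof -
  let ?D = "\<lambda>k. (int (f k) - int (f (n - k))) * (int (cW k) - int (cB k))"
  have "?D k0 < 0" using k0 by (simp add: mult_pos_neg)
  moreover have "(\<Sum>k\<in>{0..n} - {k0}. ?D k) \<le> 0"
    by (rule sum_nonpos) (use reflected_term_nonpos[of n f cW cB, OF fmono symW symB le] in simp)
  ultimately have "(\<Sum>k=0..n. ?D k) < 0"
    using sum.remove[of "{0..n}" k0 ?D] k0 by simp
  then show ?thesis using weighted_sum_diff[of n f cW cB, OF fz symW symB] by linarith
qed

lemma binomial_right_strict_mono:
  assumes "a < b" "1 \<le> j" "j \<le> b"
  shows "a choose j < b choose j"
proof -
  obtain b' j' where b': "b = Suc b'" and j': "j = Suc j'" using assms by (cases b; cases j) auto
  have "b choose j = (b' choose j') + (b' choose j)" unfolding b' j' by simp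
  moreover have "a choose j \<le> b' choose j" using assms b' by (intro binomial_right_mono) simp
  moreover have "0 < b' choose j'" using assms b' j' by simp
  ultimately show ?thesis by linarith
qed

section \<open>Arcs maximise the weighted heavy-window count\<close>

text \<open>This is the number of \<open>r\<close>-sets missing a cover arc of \<open>W\<close>, counted via their unique
  heavy maximal gap (lemma \<open>card_sets_missing_cover_arc\<close>).\<close>

definition weighted_heavy_count :: "nat \<Rightarrow> nat \<Rightarrow> nat set \<Rightarrow> nat" where
  "weighted_heavy_count n r W = (\<Sum>k<n-1. heavy_count W n k * ((n - 2 - k) choose (r - 2)))"

lemma heavy_count_le_arc:
  assumes W: "W \<subseteq> {..<n}" "card W = 2*l+1" and B: "is_arc n (2*l+1) B" and k: "2 * k \<le> n"
  shows "heavy_count W n k \<le> heavy_count B n k"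
proof (cases "k \<le> l")
  case False
  have "finite W" using W(1) by (rule finite_subset) simp
  then have "heavy_count W n k \<le> k" using heavy_count_le k by blast
  also have "k \<le> heavy_count B n k"
    using B heavy_count_arc_ge[of l n k] card_mono[of "{..<n}" W] W False k
    unfolding is_arc_def by auto
  finally show ?thesis .
qed (simp add: heavy_count_eq_0[OF W(2)])

lemma heavy_count_complement_arc:
  assumes "is_arc n m B" "m \<le> n" "odd m" "k \<le> n"
  shows "heavy_count B n k + heavy_count B n (n - k) = n"
proof -
  obtain j where B: "B = {(j + s) mod n | s. s < m}" using assms(1) unfolding is_arc_def by blast
  have "0 < n" using assms(2,3) by (cases m) auto
  then have "B \<subseteq> {..<n}" unfolding B by auto
  then show ?thesis using heavy_count_complement[of B n k] card_arc[OF assms(2), of j] assms(3,4) B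
    by simp
qed

lemma weighted_heavy_count_le_arc:
  assumes W: "W \<subseteq> {..<n}" "card W = 2*l+1" and B: "is_arc n (2*l+1) B" and r: "3 \<le> r"
  shows "weighted_heavy_count n r W \<le> weighted_heavy_count n r B"
proof -
  have n: "2*l+1 \<le> n" using card_mono[OF _ W(1)] W(2) by simp
  have "finite W" using W(1) by (rule finite_subset) simp
  then have "(\<Sum>k<n-1. heavy_count W n k * ((n - 2 - k) choose (r - 2)))
      \<le> (\<Sum>k<n-1. heavy_count B n k * ((n - 2 - k) choose (r - 2)))"
    using r heavy_count_complement[of W n] heavy_count_complement_arc[OF B n]
      heavy_count_le_arc[OF W B] W(1,2)
    by (intro weighted_sum_le) (auto intro: binomial_right_mono)
  then show ?thesis unfolding weighted_heavy_count_def .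
qed

lemma weighted_heavy_count_less_arc:
  assumes W: "W \<subseteq> {..<n}" "card W = 2*l+1" "\<not> is_arc n (2*l+1) W"
    and B: "is_arc n (2*l+1) B" and r: "3 \<le> r" "3*r - 4 \<le> n" and l: "1 \<le> l"
  shows "weighted_heavy_count n r W < weighted_heavy_count n r B"
proof -
  define f where "f k = (n - 2 - k) choose (r - 2)" for k
  have fW: "finite W" using W(1) by (rule finite_subset) simp
  have n: "2*l+3 \<le> n" using is_arc_if_small[OF W(1,2) l] W(3) by linarith
  have "heavy_count W n (l+1) < l+1" using is_arc_of_heavy_count[OF fW W(1,2) l] W(3) by linarith
  moreover have "l+1 \<le> heavy_count B n (l+1)"
    using B heavy_count_arc_ge[of l n "l+1"] n unfolding is_arc_def by auto
  moreover have "f (n - (l+1)) < f (l+1)"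
    \<comment> \<open>\<open>n \<ge> 2l + 3\<close> and \<open>n \<ge> 3r - 4\<close> give \<open>n \<ge> l + r + 1\<close>, so \<open>r - 2 \<le> n - 2 - (l+1)\<close>\<close>
    unfolding f_def using n l r by (intro binomial_right_strict_mono) auto
  ultimately have "(\<Sum>k<n-1. heavy_count W n k * f k) < (\<Sum>k<n-1. heavy_count B n k * f k)"
    using r n heavy_count_complement[of W n] heavy_count_complement_arc[OF B] W(1,2) fW
      heavy_count_le_arc[OF W(1,2) B]
    by (intro weighted_sum_less[of n f _ _ "l+1"]) (auto simp: f_def intro: binomial_right_mono)
  then show ?thesis unfolding weighted_heavy_count_def f_def .
qed

section \<open>Maximal gaps of a set\<close>

definition gap_sets :: "nat \<Rightarrow> nat \<Rightarrow> nat \<Rightarrow> nat \<Rightarrow> nat set set" where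
  "gap_sets n r b k = {e. e \<subseteq> {0..<n} \<and> card e = r \<and>
     (b + (n - 1)) mod n \<in> e \<and> (b + k) mod n \<in> e \<and> e \<inter> window n b k = {}}"

lemma card_gap_sets:
  assumes b: "b < n" and k: "k < n - 1" and r: "2 \<le> r"
  shows "card (gap_sets n r b k) = (n - 2 - k) choose (r - 2)"
proof -
  define x where "x = (b + (n - 1)) mod n"
  define y where "y = (b + k) mod n"
  define Rest where "Rest = {0..<n} - window n b k - {x, y}"
  have bx: "cdist n b x = n - 1" unfolding x_def by (rule cdist_add_mod[OF b]) (use b in simp)
  have by': "cdist n b y = k" unfolding y_def using cdist_add_mod[OF b, of k] k by simp
  have xy: "x \<noteq> y" using bx by' k by auto
  have xyn: "x < n" "y < n" unfolding x_def y_def using b by auto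
  have xyw: "x \<notin> window n b k" "y \<notin> window n b k" using bx by' k unfolding window_def by auto
  have "window n b k \<subseteq> {0..<n}" unfolding window_def by auto
  then have "card ({0..<n} - window n b k) = n - k"
    using card_Diff_subset[OF finite_window] card_window[OF b, of k] k by simp
  moreover have "{x, y} \<subseteq> {0..<n} - window n b k" using xyn xyw by auto
  ultimately have "card Rest = n - k - 2" unfolding Rest_def using xy by (simp add: card_Diff_subset)
  then have cardRest: "card Rest = n - 2 - k" by simp
  have eq: "gap_sets n r b k = (\<lambda>s. s \<union> {x, y}) ` {s. s \<subseteq> Rest \<and> card s = r - 2}"
  proof
    show "gap_sets n r b k \<subseteq> (\<lambda>s. s \<union> {x, y}) ` {s. s \<subseteq> Rest \<and> card s = r - 2}"
    proof
      fix e assume "e \<in> gap_sets n r b k"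
      then have e: "e \<subseteq> {0..<n}" "card e = r" "x \<in> e" "y \<in> e" "e \<inter> window n b k = {}"
        unfolding gap_sets_def x_def y_def by auto
      have "finite e" using e(1) by (rule finite_subset) simp
      then have "card (e - {x, y}) = r - 2" using e xy by (simp add: card_Diff_subset)
      moreover have "e - {x, y} \<subseteq> Rest" unfolding Rest_def using e by auto
      moreover have "e = (e - {x, y}) \<union> {x, y}" using e by auto
      ultimately show "e \<in> (\<lambda>s. s \<union> {x, y}) ` {s. s \<subseteq> Rest \<and> card s = r - 2}" by blast
    qed
    show "(\<lambda>s. s \<union> {x, y}) ` {s. s \<subseteq> Rest \<and> card s = r - 2} \<subseteq> gap_sets n r b k"
    proof clarify
      fix s assume s: "s \<subseteq> Rest" "card s = r - 2"
      have "finite s" using s(1) unfolding Rest_def by (rule finite_subset) simp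
      moreover have "x \<notin> s" "y \<notin> s" using s(1) unfolding Rest_def by auto
      ultimately have "card (s \<union> {x, y}) = r" using s(2) xy r by (simp add: card_insert_if)
      then show "s \<union> {x, y} \<in> gap_sets n r b k"
        using s(1) xyn xyw unfolding gap_sets_def Rest_def x_def y_def by auto
    qed
  qed
  have inj: "inj_on (\<lambda>s. s \<union> {x, y}) {s. s \<subseteq> Rest \<and> card s = r - 2}"
    unfolding Rest_def by (rule inj_onI) blast
  have "finite Rest" unfolding Rest_def by simp
  then show ?thesis unfolding eq using inj cardRest by (simp add: card_image n_subsets)
qed

lemma gap_offset_le:
  assumes b: "b < n" "b' < n" and e: "e \<in> gap_sets n r b k" "e \<in> gap_sets n r b' k'"
    and w: "w \<in> window n b' k'"
  shows "cdist n b' w \<le> cdist n b w"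
proof (rule ccontr)
  define t where "t = cdist n b w"
  define t' where "t' = cdist n b' w"
  assume "\<not> ?thesis"
  then have lt: "t < t'" unfolding t_def t'_def by simp
  have wn: "w < n" and t'k: "t' < k'" using w unfolding window_def t'_def by auto
  have t'n: "t' < n" unfolding t'_def using b by (simp add: cdist_less)
  have tn: "t < n" unfolding t_def using b by (simp add: cdist_less)
  have "(b' + (t' - t - 1)) mod n = (b' + t' + (n - 1 - t)) mod n"
  proof -
    have "b' + t' + (n - 1 - t) = (b' + (t' - t - 1)) + n" using lt tn by simp
    then show ?thesis by (metis mod_add_self2)
  qed
  also have "\<dots> = (w + (n - 1 - t)) mod n"
    using add_cdist_mod[OF b(2) wn] unfolding t'_def by (metis mod_add_left_eq)
  also have "\<dots> = (b + t + (n - 1 - t)) mod n"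
    using add_cdist_mod[OF b(1) wn] unfolding t_def by (metis mod_add_left_eq)
  also have "b + t + (n - 1 - t) = b + (n - 1)" using tn by simp
  finally have "cdist n b' ((b + (n - 1)) mod n) = t' - t - 1"
    using cdist_add_mod[OF b(2), of "t' - t - 1"] t'n by simp
  then have "(b + (n - 1)) mod n \<in> window n b' k'" using t'k b unfolding window_def by simp
  then show False using e unfolding gap_sets_def by blast
qed

lemma gap_sets_unique:
  assumes b: "b < n" "b' < n" and k: "k < n" "k' < n"
    and w: "w \<in> window n b k" "w \<in> window n b' k'"
    and e: "e \<in> gap_sets n r b k" "e \<in> gap_sets n r b' k'"
  shows "b = b' \<and> k = k'"
proof -
  have wn: "w < n" using w unfolding window_def by simp
  have "cdist n b w = cdist n b' w"
    using gap_offset_le[OF b e w(2)] gap_offset_le[OF b(2,1) e(2,1) w(1)] by simp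
  then have bb': "b = b'"
    using add_cdist_mod[OF b(1) wn] add_cdist_mod[OF b(2) wn]
      mod_add_right_cancel_less[OF b, of "cdist n b w"] by simp
  have "\<not> k < k'" if "e \<in> gap_sets n r b k" "e \<in> gap_sets n r b k'" "k < n" for k k'
  proof
    assume "k < k'"
    then have "(b + k) mod n \<in> window n b k'"
      using cdist_add_mod[OF b(1) \<open>k < n\<close>] b(1) unfolding window_def by simp
    then show False using that unfolding gap_sets_def by blast
  qed
  then show ?thesis using bb' e k by (metis linorder_neqE_nat)
qed

text \<open>Seen from \<open>u\<close>, the gap runs clockwise from just after the last point \<open>x\<^sub>0\<close> of \<open>e\<close>
  to the first point \<open>y\<^sub>0\<close> of \<open>e\<close>.\<close>

lemma gap_window_of_extremes:
  assumes e: "e \<subseteq> {0..<n}" and u: "u < n" and x0: "x0 \<in> e" and y0: "y0 \<in> e"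
    and between: "\<And>x. x \<in> e \<Longrightarrow> cdist n u y0 \<le> cdist n u x \<and> cdist n u x \<le> cdist n u x0"
    and lt: "cdist n u y0 < cdist n u x0" and L: "L < cdist n u y0"
  shows "\<exists>b g. b < n \<and> g < n - 1 \<and> {x. x < n \<and> cdist n u x \<le> L} \<subseteq> window n b g
           \<and> e \<in> gap_sets n (card e) b g"
proof -
  define dmax where "dmax = cdist n u x0"
  define dmin where "dmin = cdist n u y0"
  have dmax: "dmax < n" using cdist_less[of n u x0] u unfolding dmax_def by simp
  have "x0 < n" "y0 < n" using x0 y0 e by auto
  define b where "b = (u + (dmax + 1)) mod n"
  define g where "g = n - 1 - dmax + dmin"
  have bn: "b < n" unfolding b_def using u by simp
  have cb: "cdist n b x = cdist n u x + n - (dmax + 1)" if "x < n" "cdist n u x \<le> dmax" for x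
    using cdist_shift[OF u \<open>x < n\<close>, of "dmax + 1"] dmax that unfolding b_def by simp
  have "cdist n b x0 = n - 1" using cb[OF \<open>x0 < n\<close>] dmax unfolding dmax_def by simp
  then have x0b: "(b + (n - 1)) mod n = x0" using add_cdist_mod[OF bn \<open>x0 < n\<close>] by simp
  have "cdist n b y0 = g" using cb[OF \<open>y0 < n\<close>] lt dmax unfolding dmin_def dmax_def g_def by simp
  then have y0b: "(b + g) mod n = y0" using add_cdist_mod[OF bn \<open>y0 < n\<close>] by simp
  have "x \<notin> window n b g" if "x \<in> e" for x
  proof -
    have "x < n" using that e by auto
    then have "\<not> cdist n b x < g"
      using cb[OF \<open>x < n\<close>] between[OF that] dmax unfolding g_def dmin_def dmax_def by linarith
    then show ?thesis unfolding window_def by simp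
  qed
  then have "e \<inter> window n b g = {}" by blast
  moreover have "{x. x < n \<and> cdist n u x \<le> L} \<subseteq> window n b g"
  proof clarify
    fix x assume "x < n" "cdist n u x \<le> L"
    then have "cdist n b x < g" using cb[of x] L lt dmax unfolding g_def dmin_def dmax_def by simp
    then show "x \<in> window n b g" using \<open>x < n\<close> unfolding window_def by simp
  qed
  moreover have "g < n - 1" using lt dmax unfolding g_def dmin_def dmax_def by simp
  moreover have "e \<in> gap_sets n (card e) b g"
    unfolding gap_sets_def using x0 y0 x0b y0b e \<open>e \<inter> window n b g = {}\<close> by simp
  ultimately show ?thesis using bn by blast
qed

lemma gap_window_exists:
  assumes e: "e \<subseteq> {0..<n}" "2 \<le> card e" and u: "u < n"
    and miss: "e \<inter> {x. x < n \<and> cdist n u x \<le> L} = {}"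
  shows "\<exists>b g. b < n \<and> g < n - 1 \<and> {x. x < n \<and> cdist n u x \<le> L} \<subseteq> window n b g
           \<and> e \<in> gap_sets n (card e) b g"
proof -
  have fin: "finite e" using e(1) by (rule finite_subset) simp
  let ?D = "cdist n u ` e"
  have "inj_on (cdist n u) e"
  proof (rule inj_onI)
    fix x y assume "x \<in> e" "y \<in> e" "cdist n u x = cdist n u y"
    moreover have "x < n" "y < n" using e(1) \<open>x \<in> e\<close> \<open>y \<in> e\<close> by auto
    ultimately show "x = y" using cdist_inj[OF u] by blast
  qed
  then have "card ?D \<ge> 2" using e(2) by (simp add: card_image)
  then have "?D \<noteq> {}" by auto
  then have "Max ?D \<in> ?D" "Min ?D \<in> ?D" using fin by (simp_all add: Max_in Min_in)
  then obtain x0 y0 where x0: "x0 \<in> e" "cdist n u x0 = Max ?D" and y0: "y0 \<in> e" "cdist n u y0 = Min ?D"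
    by (metis imageE)
  have between: "cdist n u y0 \<le> cdist n u x \<and> cdist n u x \<le> cdist n u x0" if "x \<in> e" for x
    unfolding x0(2) y0(2) using fin that by simp
  have "cdist n u y0 < cdist n u x0"
  proof (rule ccontr)
    assume "\<not> ?thesis"
    then have "?D \<subseteq> {cdist n u y0}" using between by fastforce
    then have "card ?D \<le> 1" using card_mono[of "{cdist n u y0}" ?D] by simp
    then show False using \<open>card ?D \<ge> 2\<close> by simp
  qed
  moreover have "L < cdist n u y0" using miss y0(1) e(1) by fastforce
  ultimately show ?thesis using gap_window_of_extremes[OF e(1) u x0(1) y0(1) between] by blast
qed

definition heavy_gaps :: "nat set \<Rightarrow> nat \<Rightarrow> (nat \<times> nat) set" where
  "heavy_gaps W n = Sigma {..<n-1} (\<lambda>k. {b. b < n \<and> heavy W n b k})"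

lemma card_UN_gap_sets:
  assumes W: "W \<subseteq> {..<n}" and r: "2 \<le> r"
  shows "card (\<Union>(k, b)\<in>heavy_gaps W n. gap_sets n r b k) = weighted_heavy_count n r W"
proof -
  have fW: "finite W" using W by (rule finite_subset) simp
  let ?P = "heavy_gaps W n" and ?G = "\<lambda>(k, b). gap_sets n r b k"
  have disj: "\<forall>i\<in>?P. \<forall>j\<in>?P. i \<noteq> j \<longrightarrow> ?G i \<inter> ?G j = {}"
  proof (intro ballI impI)
    fix i j assume ij: "i \<in> ?P" "j \<in> ?P" "i \<noteq> j"
    obtain k b k' b' where i: "i = (k, b)" and j: "j = (k', b')" by fastforce
    have bk: "b < n" "b' < n" "k < n" "k' < n" "heavy W n b k" "heavy W n b' k'"
      using ij unfolding i j heavy_gaps_def by auto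
    obtain w where "w \<in> window n b k" "w \<in> window n b' k'"
      using heavy_windows_meet[OF fW bk(5,6)] by blast
    then show "?G i \<inter> ?G j = {}" using gap_sets_unique[OF bk(1-4)] ij(3) unfolding i j by auto
  qed
  have fin: "\<forall>i\<in>?P. finite (?G i)"
    unfolding gap_sets_def by (auto intro: finite_subset[of _ "Pow {0..<n}"])
  have "finite ?P" unfolding heavy_gaps_def by simp
  then have "card (\<Union>(k, b)\<in>?P. gap_sets n r b k) = (\<Sum>(k, b)\<in>?P. card (gap_sets n r b k))"
    using card_UN_disjoint[OF _ fin disj] by (simp add: case_prod_unfold)
  also have "\<dots> = (\<Sum>(k, b)\<in>?P. (n - 2 - k) choose (r - 2))"
    by (rule sum.cong) (use card_gap_sets r in \<open>auto simp: heavy_gaps_def\<close>)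
  also have "\<dots> = weighted_heavy_count n r W"
    unfolding heavy_gaps_def weighted_heavy_count_def heavy_count_def by (subst sum.Sigma[symmetric]) auto
  finally show ?thesis .
qed

lemma sets_missing_arc_eq_UN_gap_sets:
  fixes \<A> :: "nat set set"
  assumes W: "W \<subseteq> {..<n}" and r: "2 \<le> r"
    and arcs: "\<And>A. A \<in> \<A> \<Longrightarrow> \<exists>u L. u < n \<and> A = {x. x < n \<and> cdist n u x \<le> L}"
    and arcs_heavy: "\<And>A. A \<in> \<A> \<Longrightarrow> card W < 2 * card (A \<inter> W)"
    and heavy_covers: "\<And>b k. b < n \<Longrightarrow> heavy W n b k \<Longrightarrow> \<exists>A\<in>\<A>. A \<subseteq> window n b k"
  shows "{e. e \<subseteq> {0..<n} \<and> card e = r \<and> (\<exists>A\<in>\<A>. e \<inter> A = {})}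
       = (\<Union>(k, b)\<in>heavy_gaps W n. gap_sets n r b k)"
proof (rule subset_antisym)
  have fW: "finite W" using W by (rule finite_subset) simp
  show "{e. e \<subseteq> {0..<n} \<and> card e = r \<and> (\<exists>A\<in>\<A>. e \<inter> A = {})}
      \<subseteq> (\<Union>(k, b)\<in>heavy_gaps W n. gap_sets n r b k)"
  proof
    fix e assume "e \<in> {e. e \<subseteq> {0..<n} \<and> card e = r \<and> (\<exists>A\<in>\<A>. e \<inter> A = {})}"
    then obtain A where e: "e \<subseteq> {0..<n}" "r = card e" and A: "A \<in> \<A>" "e \<inter> A = {}" by auto
    obtain u L where u: "u < n" and AuL: "A = {x. x < n \<and> cdist n u x \<le> L}" using arcs[OF A(1)] by blast
    obtain b g where bg: "b < n" "g < n - 1" "A \<subseteq> window n b g" "e \<in> gap_sets n r b g"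
      using gap_window_exists[OF e(1) _ u, of L] e(2) r A(2) AuL by auto
    have "card (A \<inter> W) \<le> card (window n b g \<inter> W)" using bg(3) fW by (intro card_mono) auto
    then have "heavy W n b g" using arcs_heavy[OF A(1)] unfolding heavy_def by linarith
    then show "e \<in> (\<Union>(k, b)\<in>heavy_gaps W n. gap_sets n r b k)" using bg unfolding heavy_gaps_def by blast
  qed
  show "(\<Union>(k, b)\<in>heavy_gaps W n. gap_sets n r b k)
      \<subseteq> {e. e \<subseteq> {0..<n} \<and> card e = r \<and> (\<exists>A\<in>\<A>. e \<inter> A = {})}"
  proof clarify
    fix k b e assume kb: "(k, b) \<in> heavy_gaps W n" and "e \<in> gap_sets n r b k"
    moreover obtain A where "A \<in> \<A>" "A \<subseteq> window n b k"
      using heavy_covers kb unfolding heavy_gaps_def by blast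
    ultimately show "e \<subseteq> {0..<n} \<and> card e = r \<and> (\<exists>A\<in>\<A>. e \<inter> A = {})"
      unfolding gap_sets_def by blast
  qed
qed

section \<open>Cover arcs of a cyclically ordered point set\<close>

lemma add_mod_rotate:
  fixes i m q :: nat
  assumes "i < m"
  shows "(q + (i + (m - q mod m)) mod m) mod m = i"
proof -
  have "q mod m < m" using assms by simp
  then have "q + (i + (m - q mod m)) = (q div m) * m + i + m" using div_mult_mod_eq[of q m] by linarith
  also have "\<dots> = i + (q div m + 1) * m" by (simp add: algebra_simps)
  finally have "q + (i + (m - q mod m)) = i + (q div m + 1) * m" .
  then show ?thesis using assms by (metis mod_add_right_eq mod_mult_self1 mod_less)
qed

lemma downclosed_mem_iff_less_card:
  fixes P :: "nat set"
  assumes "P \<subseteq> {..<m}" "\<And>s t. t \<in> P \<Longrightarrow> s < t \<Longrightarrow> s \<in> P"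
  shows "s \<in> P \<longleftrightarrow> s < card P"
proof
  assume s: "s \<in> P"
  have "{..s} \<subseteq> P" using assms(2)[OF s] s by (auto simp: le_less)
  then have "card {..s} \<le> card P" using assms(1) by (intro card_mono) (auto intro: finite_subset)
  then show "s < card P" by simp
next
  assume s: "s < card P"
  show "s \<in> P"
  proof (rule ccontr)
    assume "s \<notin> P"
    then have "P \<subseteq> {..<s}" using assms(2) by (metis lessThan_iff linorder_neqE_nat subsetI)
    then have "card P \<le> s" using card_mono[of "{..<s}" P] by simp
    then show False using s by simp
  qed
qed

lemma shifted_rotation_mono:
  fixes v :: "nat \<Rightarrow> nat"
  assumes mono: "\<And>s t. s < t \<Longrightarrow> t < m \<Longrightarrow> v s < v t" and vn: "\<And>s. s < m \<Longrightarrow> v s < n"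
    and c: "c \<le> n" and q: "q = card {s. s < m \<and> v s + c < n}"
    and st: "s < t" "t < m"
  shows "(v ((q+s) mod m) + c) mod n < (v ((q+t) mod m) + c) mod n"
proof -
  let ?P = "{s. s < m \<and> v s + c < n}"
  have P: "i \<in> ?P \<longleftrightarrow> i < q" for i
    unfolding q by (rule downclosed_mem_iff_less_card[of _ m]) (use mono in fastforce)+
  have qm: "q \<le> m" unfolding q using card_mono[of "{..<m}" ?P] by auto
  have val: "(v i + c) mod n = (if i < q then v i + c else v i + c - n)" if "i < m" for i
    using P[of i] vn[OF that] c that by (auto simp: mod_if)
  show ?thesis
  proof (cases "q + t < m")
    case True
    moreover have "\<not> v (q+s) + c < n" using P[of "q+s"] True st by simp
    ultimately show ?thesis using val[of "q+s"] val[of "q+t"] st mono[of "q+s" "q+t"] by simp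
  next
    case F1: False
    show ?thesis
    proof (cases "q + s < m")
      case True
      then have "(q+s) mod m = q + s" "(q+t) mod m = q + t - m" using F1 st qm by (auto simp: mod_if)
      moreover have "q + t - m < q" using st F1 by linarith
      moreover have "\<not> v (q+s) + c < n" using P[of "q+s"] True st by simp
      ultimately show ?thesis using val[of "q+s"] val[of "q+t-m"] True st vn[of "q+s"] c by simp
    next
      case False
      then have "(q+s) mod m = q + s - m" "(q+t) mod m = q + t - m" using F1 st qm by (auto simp: mod_if)
      moreover have "q + t - m < q" "q + s - m < q + t - m" "q + t - m < m" using st F1 False qm
        by linarith+
      ultimately show ?thesis using val[of "q+s-m"] val[of "q+t-m"] mono[of "q+s-m" "q+t-m"] by simp
    qed
  qed
qed

lemma strict_mono_bounded_id:
  fixes g :: "nat \<Rightarrow> nat"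
  assumes mono: "\<And>s t. s < t \<Longrightarrow> t < m \<Longrightarrow> g s < g t" and bd: "\<And>s. s < m \<Longrightarrow> g s < m"
    and s: "s < m"
  shows "g s = s"
proof -
  have ge: "g s + d \<le> g (s + d)" if "s + d < m" for s d
    using that
  proof (induction d)
    case (Suc d)
    then show ?case using mono[of "s + d" "s + Suc d"] by simp
  qed simp
  have "g 0 + s \<le> g s" using ge[of 0 s] s by simp
  moreover have "g s + (m - 1 - s) \<le> g (m - 1)" using ge[of s "m - 1 - s"] s by simp
  moreover have "g (m - 1) < m" using bd s by simp
  ultimately show ?thesis by linarith
qed

locale cyclic_points =
  fixes n l :: nat and v :: "nat \<Rightarrow> nat"
  assumes v_mono: "\<And>s t. s < t \<Longrightarrow> t < 2*l+1 \<Longrightarrow> v s < v t"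
    and v_less: "\<And>s. s < 2*l+1 \<Longrightarrow> v s < n"
begin

abbreviation "M \<equiv> 2*l+1"

definition points :: "nat set" where
  "points = v ` {..<M}"

definition rank :: "nat \<Rightarrow> nat" where
  "rank b = card {s. s < M \<and> v s < b}"

definition cover_arc :: "nat \<Rightarrow> nat set" where
  "cover_arc a = cint n (v a) (v ((a + l) mod M))"

lemma points_subset: "points \<subseteq> {..<n}"
  unfolding points_def using v_less by auto

lemma inj_on_v: "inj_on v {..<M}"
  by (rule inj_onI) (metis lessThan_iff linorder_neqE_nat v_mono less_irrefl)

lemma card_points: "card points = M"
  unfolding points_def using inj_on_v by (simp add: card_image)

lemma rank_v:
  assumes a: "a < M"
  shows "rank (v a) = a"
proof -
  have "{s. s < M \<and> v s < v a} = {..<a}"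
  proof (intro set_eqI iffI)
    fix s assume "s \<in> {s. s < M \<and> v s < v a}"
    then show "s \<in> {..<a}" using v_mono[of a s] a by (metis lessThan_iff linorder_neqE_nat less_asym mem_Collect_eq)
  next
    fix s assume "s \<in> {..<a}"
    then show "s \<in> {s. s < M \<and> v s < v a}" using v_mono[of s a] a by auto
  qed
  then show ?thesis unfolding rank_def by simp
qed

lemma cdist_rotate_mono:
  assumes b: "b < n" and st: "s < t" "t < M"
  shows "cdist n b (v ((rank b + s) mod M)) < cdist n b (v ((rank b + t) mod M))"
proof -
  have "rank b = card {s. s < M \<and> v s + (n - b) < n}"
    unfolding rank_def using b by (intro arg_cong[where f = card]) auto
  then have "(v ((rank b + s) mod M) + (n - b)) mod n < (v ((rank b + t) mod M) + (n - b)) mod n"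
    using shifted_rotation_mono[of M v n "n - b" "rank b" s t, OF v_mono v_less] st by simp
  moreover have "cdist n b x = (x + (n - b)) mod n" for x unfolding cdist_def using b by simp
  ultimately show ?thesis by simp
qed

lemma mem_cover_arc:
  assumes a: "a < M" and s: "s \<le> l"
  shows "v ((a + s) mod M) \<in> cover_arc a"
proof -
  have "cdist n (v a) (v ((a + s) mod M)) \<le> cdist n (v a) (v ((a + l) mod M))"
  proof (cases "s = l")
    case False
    then show ?thesis using cdist_rotate_mono[OF v_less[OF a], of s l] rank_v[OF a] s by simp
  qed simp
  moreover have "v ((a + s) mod M) < n" "v ((a + l) mod M) < n" using v_less by simp_all
  ultimately show ?thesis unfolding cover_arc_def using cint_eq_cdist[OF v_less[OF a]] by simp
qed

lemma card_cover_arc_points: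
  assumes a: "a < M"
  shows "l + 1 \<le> card (cover_arc a \<inter> points)"
proof -
  let ?f = "\<lambda>s. v ((a + s) mod M)"
  have "inj_on ?f {..l}"
  proof (rule inj_onI)
    fix x y assume xy: "x \<in> {..l}" "y \<in> {..l}" "?f x = ?f y"
    then have "(x + a) mod M = (y + a) mod M" using inj_on_v unfolding inj_on_def by (simp add: add.commute)
    then show "x = y" using mod_add_right_cancel_less[of x M y a] xy by simp
  qed
  then have "card (?f ` {..l}) = l + 1" by (simp add: card_image)
  moreover have "?f ` {..l} \<subseteq> cover_arc a \<inter> points"
    using mem_cover_arc[OF a] unfolding points_def by auto
  moreover have "finite (cover_arc a \<inter> points)" unfolding points_def by simp
  ultimately show ?thesis using card_mono[of "cover_arc a \<inter> points" "?f ` {..l}"] by simp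
qed

lemma heavy_window_contains_rank_prefix:
  assumes b: "b < n" and heavy: "heavy points n b k"
  shows "cdist n b (v ((rank b + l) mod M)) < k"
proof -
  define q where "q = rank b"
  define ofs where "ofs s = cdist n b (v ((q + s) mod M))" for s
  have inc: "ofs s < ofs t" if "s < t" "t < M" for s t
    using cdist_rotate_mono[OF b that] unfolding ofs_def q_def .
  define S where "S = {s. s < M \<and> ofs s < k}"
  have sub: "window n b k \<inter> points \<subseteq> (\<lambda>s. v ((q + s) mod M)) ` S"
  proof
    fix w assume w: "w \<in> window n b k \<inter> points"
    then obtain i where i: "i < M" "w = v i" unfolding points_def by auto
    define s where "s = (i + (M - q mod M)) mod M"
    have "(q + s) mod M = i" using add_mod_rotate[OF i(1)] unfolding s_def .
    then have "s \<in> S" using w i unfolding S_def ofs_def s_def window_def by simp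
    then show "w \<in> (\<lambda>s. v ((q + s) mod M)) ` S" using \<open>(q + s) mod M = i\<close> i by force
  qed
  have "finite S" unfolding S_def by simp
  then have "card (window n b k \<inter> points) \<le> card ((\<lambda>s. v ((q + s) mod M)) ` S)"
    using sub by (intro card_mono) simp_all
  also have "\<dots> \<le> card S" by (rule card_image_le) fact
  finally have card_S: "card (window n b k \<inter> points) \<le> card S" .
  have "l \<in> S"
  proof (rule ccontr)
    assume "l \<notin> S"
    have "S \<subseteq> {..<l}"
    proof
      fix s assume "s \<in> S"
      then have "s < M" "ofs s < k" unfolding S_def by auto
      then show "s \<in> {..<l}" using \<open>l \<notin> S\<close> inc[of l s] unfolding S_def by (cases "l < s"; cases "s = l") auto
    qed
    then have "card S \<le> l" using card_mono[of "{..<l}" S] by simp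
    then show False using heavy card_S card_points unfolding heavy_def by linarith
  qed
  then show ?thesis unfolding S_def ofs_def q_def by simp
qed

lemma cover_arc_subset_window:
  assumes b: "b < n" and k: "cdist n b (v ((rank b + l) mod M)) < k"
  shows "cover_arc (rank b mod M) \<subseteq> window n b k"
proof
  define a where "a = rank b mod M"
  define ofs where "ofs s = cdist n b (v ((rank b + s) mod M))" for s
  have va: "v a = v ((rank b + 0) mod M)" unfolding a_def by simp
  have al: "v ((a + l) mod M) = v ((rank b + l) mod M)" unfolding a_def by (simp add: mod_add_left_eq)
  have "ofs 0 \<le> ofs l" using cdist_rotate_mono[OF b, of 0 l] unfolding ofs_def by (cases l) auto
  have "v a < n" "v ((a + l) mod M) < n" using v_less unfolding a_def by simp_all
  then have dist: "cdist n (v a) (v ((a + l) mod M)) = ofs l - ofs 0"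
    using cdist_trans_le[OF b] \<open>ofs 0 \<le> ofs l\<close> va al unfolding ofs_def by simp
  fix x assume "x \<in> cover_arc (rank b mod M)"
  then have x: "x < n" "cdist n (v a) x \<le> ofs l - ofs 0"
    unfolding cover_arc_def a_def[symmetric]
    using cint_eq_cdist[OF \<open>v a < n\<close> \<open>v ((a + l) mod M) < n\<close>] dist by auto
  have "ofs l < n" unfolding ofs_def using b by (simp add: cdist_less)
  then have "cdist n b x = ofs 0 + cdist n (v a) x"
    using cdist_add[OF b \<open>v a < n\<close> x(1)] x(2) \<open>ofs 0 \<le> ofs l\<close> va unfolding ofs_def by simp
  then show "x \<in> window n b k" using x k \<open>ofs 0 \<le> ofs l\<close> unfolding window_def ofs_def by simp
qed

lemma card_sets_missing_cover_arc:
  assumes "2 \<le> r"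
  shows "card {e. e \<subseteq> {0..<n} \<and> card e = r \<and> (\<exists>a<M. e \<inter> cover_arc a = {})} = weighted_heavy_count n r points"
proof -
  have "{e. e \<subseteq> {0..<n} \<and> card e = r \<and> (\<exists>a<M. e \<inter> cover_arc a = {})}
      = {e. e \<subseteq> {0..<n} \<and> card e = r \<and> (\<exists>A\<in>cover_arc ` {..<M}. e \<inter> A = {})}"
    by (simp add: Bex_def)
  also have "\<dots> = (\<Union>(k, b)\<in>heavy_gaps points n. gap_sets n r b k)"
  proof (rule sets_missing_arc_eq_UN_gap_sets[OF points_subset assms])
    fix A assume "A \<in> cover_arc ` {..<M}"
    then obtain a where a: "a < M" "A = cover_arc a" by auto
    have "(a + l) mod M < M" by simp
    then have "A = {x. x < n \<and> cdist n (v a) x \<le> cdist n (v a) (v ((a + l) mod M))}"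
      using cint_eq_cdist[OF v_less[OF a(1)] v_less] a(2) unfolding cover_arc_def by simp
    with v_less[OF a(1)] show "\<exists>u L. u < n \<and> A = {x. x < n \<and> cdist n u x \<le> L}"
      by blast
    show "card points < 2 * card (A \<inter> points)"
      using card_cover_arc_points[OF a(1)] unfolding a(2) card_points by linarith
  next
    fix b k assume "b < n" "heavy points n b k"
    then have "cover_arc (rank b mod M) \<subseteq> window n b k"
      using cover_arc_subset_window heavy_window_contains_rank_prefix by blast
    then show "\<exists>A\<in>cover_arc ` {..<M}. A \<subseteq> window n b k" by (intro bexI[of _ "cover_arc (rank b mod M)"]) auto
  qed
  finally show ?thesis using card_UN_gap_sets[OF points_subset assms] by simp
qed

lemma arc_points_enumeration:
  assumes arc: "points = {(j + s) mod n | s. s < M}"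
  obtains q where "\<And>s. s < M \<Longrightarrow> v ((q + s) mod M) = (j + s) mod n"
proof
  define j' where "j' = j mod n"
  have j'n: "j' < n" unfolding j'_def using v_less[of 0] by simp
  have jj: "(j + s) mod n = (j' + s) mod n" for s unfolding j'_def by (simp add: mod_add_left_eq)
  have "M \<le> n" using card_points card_mono[OF _ points_subset] by simp
  define g where "g s = cdist n j' (v ((rank j' + s) mod M))" for s
  have "g s < M" for s
  proof -
    have "v ((rank j' + s) mod M) \<in> points" unfolding points_def by simp
    then obtain s' where s': "s' < M" "v ((rank j' + s) mod M) = (j' + s') mod n"
      using arc jj by auto
    then show ?thesis using cdist_add_mod[OF j'n, of s'] \<open>M \<le> n\<close> unfolding g_def by simp
  qed
  then have "g s = s" if "s < M" for s
    using strict_mono_bounded_id[of M g s] cdist_rotate_mono[OF j'n] that unfolding g_def by blast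
  then show "v ((rank j' + s) mod M) = (j + s) mod n" if "s < M" for s
    using add_cdist_mod[OF j'n v_less, of "(rank j' + s) mod M"] that jj unfolding g_def by simp
qed

end

section \<open>Semi-valid tuples\<close>

definition clockwise_listing :: "nat \<Rightarrow> nat list \<Rightarrow> nat list" where
  "clockwise_listing l C = map (\<lambda>s. wi C (2*int s + 1)) [0..<l+1] @ map (\<lambda>s. wi C (2*int s + 2)) [0..<l]"

lemma semi_valid_iff:
  "semi_valid n l C \<longleftrightarrow> length C = 2*l+1 \<and> distinct C \<and> set C \<subseteq> {0..<n} \<and>
     cyc_ordered (clockwise_listing l C)"
  unfolding semi_valid_def clockwise_listing_def ..

lemma semi_valid_set:
  assumes "semi_valid n l C"
  shows "set C \<subseteq> {..<n}" "card (set C) = 2*l+1"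
  using assms distinct_card[of C] unfolding semi_valid_iff by auto

lemma clockwise_listing_nth:
  assumes len: "length C = 2*l+1" and s: "s < 2*l+1"
  shows "clockwise_listing l C ! s = C ! ((2*s) mod (2*l+1))"
proof (cases "s < l + 1")
  case True
  then have "clockwise_listing l C ! s = wi C (2*int s + 1)"
    unfolding clockwise_listing_def by (simp add: nth_append_left del: upt_Suc)
  also have "\<dots> = C ! (2 * s)" unfolding wi_def len using True by (simp add: nat_mult_distrib)
  finally show ?thesis using True by simp
next
  case False
  moreover have "s - Suc l < l" using s False by simp
  ultimately have "clockwise_listing l C ! s = wi C (2*int (s - (l+1)) + 2)"
    using s unfolding clockwise_listing_def by (simp add: nth_append_right del: upt_Suc)
  also have "\<dots> = C ! nat ((2 * int (s - (l+1)) + 1) mod int (2*l+1))"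
    unfolding wi_def len by (simp add: algebra_simps)
  also have "nat ((2 * int (s - (l+1)) + 1) mod int (2*l+1)) = 2 * s - (2*l+1)" using False s by simp
  finally show ?thesis using False s by (simp add: mod_if)
qed

text \<open>If the listing \<open>w_1, w_3, \<dots>, w_(2l+1), w_2, \<dots>, w_(2l)\<close> becomes increasing after rotating
  it by \<open>k\<close>, then \<open>w\<^sub>p\<close> is its \<open>cyc_pos l k p\<close>-th entry: the listing visits \<open>w\<^sub>p\<close> at position
  \<open>(p - 1)(l + 1)\<close>, since \<open>2(l + 1) \<equiv> 1\<close> modulo \<open>2l + 1\<close>.\<close>

definition cyc_pos :: "nat \<Rightarrow> nat \<Rightarrow> int \<Rightarrow> nat" where
  "cyc_pos l k p = nat (((p - 1) * (int l + 1) - int k) mod int (2*l+1))"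

lemma cyc_pos_less: "cyc_pos l k p < 2*l+1"
  unfolding cyc_pos_def by (simp add: nat_less_iff)

lemma nat_mod_add_int:
  fixes X :: int and m :: nat
  assumes "0 < m"
  shows "nat ((X + int s) mod int m) = (nat (X mod int m) + s) mod m"
proof -
  have "(X + int s) mod int m = (X mod int m + int s) mod int m" by (simp add: mod_add_left_eq)
  then show ?thesis using assms by (simp add: nat_mod_distrib nat_add_distrib)
qed

lemma cyc_pos_index: "nat ((p - 1) mod int (2*l+1)) = (2 * (k + cyc_pos l k p)) mod (2*l+1)"
proof -
  let ?m = "int (2*l+1)"
  have "int ((2 * (k + cyc_pos l k p)) mod (2*l+1))
      = (2 * (int k + ((p - 1) * (int l + 1) - int k) mod ?m)) mod ?m"
    unfolding cyc_pos_def by (simp add: of_nat_mod)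
  also have "\<dots> = (2 * (int k + ((p - 1) * (int l + 1) - int k))) mod ?m"
    by (metis mod_add_right_eq mod_mult_right_eq)
  also have "2 * (int k + ((p - 1) * (int l + 1) - int k)) = (p - 1) + (p - 1) * ?m"
    by (simp add: algebra_simps)
  finally show ?thesis by simp
qed

lemma cyc_pos_add: "cyc_pos l k (p + 2 * int s) = (cyc_pos l k p + s) mod (2*l+1)"
proof -
  have "(p + 2 * int s - 1) * (int l + 1) - int k
      = (((p - 1) * (int l + 1) - int k) + int s) + int s * int (2*l+1)"
    by (simp add: algebra_simps)
  then show ?thesis unfolding cyc_pos_def by (simp only: mod_mult_self1 nat_mod_add_int)
qed

lemma cyc_pos_pred: "cyc_pos l k (p - 1) = (cyc_pos l k p + l) mod (2*l+1)"
proof -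
  have "(p - 1 - 1) * (int l + 1) - int k
      = (((p - 1) * (int l + 1) - int k) + int l) + (-1) * int (2*l+1)"
    by (simp add: algebra_simps)
  then show ?thesis unfolding cyc_pos_def by (simp only: mod_mult_self1 nat_mod_add_int)
qed

lemma cyc_pos_surj:
  assumes a: "a < 2*l+1"
  shows "\<exists>p. 1 \<le> p \<and> p \<le> int (2*l+1) \<and> cyc_pos l k p = a"
proof (intro exI conjI)
  let ?m = "int (2*l+1)"
  define p where "p = 1 + int ((2*(a + k)) mod (2*l+1))"
  have "(2*(a + k)) mod (2*l+1) < 2*l+1" by simp
  then show "1 \<le> p" "p \<le> ?m" unfolding p_def by linarith+
  have "((p - 1) * (int l + 1) - int k) mod ?m = ((2*(int a + int k)) * (int l + 1) - int k) mod ?m"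
    unfolding p_def by (simp add: of_nat_mod) (metis mod_diff_left_eq mod_mult_left_eq)
  also have "(2*(int a + int k)) * (int l + 1) - int k = int a + (int a + int k) * ?m"
    by (simp add: algebra_simps)
  finally show "cyc_pos l k p = a" unfolding cyc_pos_def using a by simp
qed

lemma semi_valid_enumeration:
  assumes sv: "semi_valid n l C"
  obtains v k where "cyclic_points n l v" "set C = v ` {..<2*l+1}"
    "\<And>p. wi C p = v (cyc_pos l k p)"
proof -
  define m where "m = 2*l+1"
  have len: "length C = m" and dist: "distinct C" and sub: "set C \<subseteq> {0..<n}"
    and cyc: "cyc_ordered (clockwise_listing l C)" using sv unfolding semi_valid_iff m_def by auto
  obtain k where sorted: "sorted_wrt (<) (rotate k (clockwise_listing l C))"
    using cyc unfolding cyc_ordered_def by auto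
  have lenL: "length (clockwise_listing l C) = m" unfolding clockwise_listing_def m_def by simp
  define v where "v t = rotate k (clockwise_listing l C) ! t" for t
  have vC: "v t = C ! ((2*(k + t)) mod m)" if "t < m" for t
  proof -
    have "v t = clockwise_listing l C ! ((k + t) mod m)"
      unfolding v_def using nth_rotate[of t "clockwise_listing l C" k] that lenL by simp
    also have "\<dots> = C ! ((2*((k + t) mod m)) mod m)"
      using clockwise_listing_nth[of C l "(k + t) mod m"] len unfolding m_def by simp
    finally show ?thesis by (simp add: mod_mult_right_eq)
  qed
  have v_mono: "v s < v t" if "s < t" "t < m" for s t
    using sorted that unfolding sorted_wrt_iff_nth_less v_def by (simp add: lenL)
  have vC_mem: "v t \<in> set C" if "t < m" for t using vC[OF that] len that by simp
  have "cyclic_points n l v"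
  proof
    show "v s < v t" if "s < t" "t < 2*l+1" for s t using v_mono that unfolding m_def by simp
    show "v s < n" if "s < 2*l+1" for s using vC_mem[of s] sub that unfolding m_def by auto
  qed
  moreover have "set C = v ` {..<m}"
  proof -
    have "inj_on v {..<m}" using v_mono by (metis inj_on_def lessThan_iff linorder_neqE_nat less_irrefl)
    then have "card (v ` {..<m}) = card (set C)" using dist len by (simp add: card_image distinct_card)
    then show ?thesis using vC_mem card_subset_eq[of "set C" "v ` {..<m}"] by auto
  qed
  moreover have "wi C p = v (cyc_pos l k p)" for p
    using vC[of "cyc_pos l k p"] cyc_pos_less[of l k p] cyc_pos_index[of p l k]
    unfolding wi_def len m_def by simp
  ultimately show ?thesis using that unfolding m_def by blast
qed

lemma card_H_add_weighted_heavy_count: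
  assumes sv: "semi_valid n l C" and r: "2 \<le> r"
  shows "card (H n r C) + weighted_heavy_count n r (set C) = n choose r"
proof -
  obtain v k where "cyclic_points n l v" and setC: "set C = v ` {..<2*l+1}"
    and wiv: "\<And>p. wi C p = v (cyc_pos l k p)" using semi_valid_enumeration[OF sv] by blast
  interpret cyclic_points n l v by fact
  have len: "length C = M" using sv unfolding semi_valid_iff by simp
  have arc: "cint n (wi C p) (wi C (p - 1)) = cover_arc (cyc_pos l k p)" for p
    unfolding cover_arc_def wiv cyc_pos_pred ..
  have meets: "(\<forall>p\<in>{1..int (length C)}. e \<inter> cint n (wi C p) (wi C (p - 1)) \<noteq> {})
      \<longleftrightarrow> (\<forall>a<M. e \<inter> cover_arc a \<noteq> {})" for e
    unfolding arc len using cyc_pos_less cyc_pos_surj by (metis atLeastAtMost_iff)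
  define R where "R = {e. e \<subseteq> {0..<n} \<and> card e = r}"
  define Miss where "Miss = {e. e \<subseteq> {0..<n} \<and> card e = r \<and> (\<exists>a<M. e \<inter> cover_arc a = {})}"
  have "H n r C = R - Miss" unfolding H_def R_def Miss_def using meets by auto
  moreover have "Miss \<subseteq> R" "finite R" unfolding Miss_def R_def
    by (auto intro: finite_subset[of _ "Pow {0..<n}"])
  then have "card (R - Miss) + card Miss = card R"
    by (metis card_Diff_subset card_mono finite_subset le_add_diff_inverse2)
  moreover have "card R = n choose r" unfolding R_def using n_subsets[of "{0..<n}" r] by simp
  ultimately show ?thesis
    using card_sets_missing_cover_arc[OF r] setC unfolding Miss_def points_def by simp
qed

lemma consecutive_iff_is_arc:
  assumes sv: "semi_valid n l C"
  shows "(\<exists>i. consecutive n C i (2*l+1)) \<longleftrightarrow> is_arc n (2*l+1) (set C)"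
proof -
  obtain v k where "cyclic_points n l v" and setC: "set C = v ` {..<2*l+1}"
    and wiv: "\<And>p. wi C p = v (cyc_pos l k p)" using semi_valid_enumeration[OF sv] by blast
  interpret cyclic_points n l v by fact
  have Cn: "set C \<subseteq> {..<n}" "card (set C) = M" using semi_valid_set[OF sv] by auto
  then have Mn: "M \<le> n" using card_mono[of "{..<n}" "set C"] by simp
  show ?thesis
  proof
    assume "\<exists>i. consecutive n C i (2*l+1)"
    then obtain i j where ij: "\<And>s. s < M \<Longrightarrow> wi C (i + 2 * int s) = (j + s) mod n"
      unfolding consecutive_def by blast
    have "{(j + s) mod n | s. s < M} \<subseteq> set C"
    proof clarify
      fix s assume "s < M"
      then have "(j + s) mod n = v (cyc_pos l k (i + 2 * int s))" using ij wiv by simp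
      then show "(j + s) mod n \<in> set C" unfolding setC using cyc_pos_less by simp
    qed
    moreover have "card {(j + s) mod n | s. s < M} = card (set C)" using card_arc[OF Mn] Cn(2) by simp
    ultimately have "{(j + s) mod n | s. s < M} = set C" by (rule card_subset_eq[OF finite_set])
    then show "is_arc n (2*l+1) (set C)" unfolding is_arc_def by (intro exI[of _ j]) (rule sym)
  next
    assume "is_arc n (2*l+1) (set C)"
    then obtain j where "set C = {(j + s) mod n | s. s < M}" unfolding is_arc_def by blast
    then have "points = {(j + s) mod n | s. s < M}" unfolding points_def setC .
    then obtain q where q: "\<And>s. s < M \<Longrightarrow> v ((q + s) mod M) = (j + s) mod n"
      using arc_points_enumeration by blast
    obtain p where p: "cyc_pos l k p = q mod M" using cyc_pos_surj[of "q mod M" l k] by auto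
    have "wi C (p + 2 * int s) = (j + s) mod n" if "s < M" for s
      using wiv cyc_pos_add p q[OF that] by (simp add: mod_add_left_eq)
    then show "\<exists>i. consecutive n C i (2*l+1)" unfolding consecutive_def by blast
  qed
qed

definition standard_tuple :: "nat \<Rightarrow> nat list" where
  "standard_tuple l = map (\<lambda>i. (i*(l+1)) mod (2*l+1)) [0..<2*l+1]"

lemma length_standard_tuple: "length (standard_tuple l) = 2*l+1"
  unfolding standard_tuple_def by (simp del: upt_Suc)

lemma nth_standard_tuple: "i < 2*l+1 \<Longrightarrow> standard_tuple l ! i = (i*(l+1)) mod (2*l+1)"
  unfolding standard_tuple_def by (simp del: upt_Suc)

lemma clockwise_listing_standard_tuple: "clockwise_listing l (standard_tuple l) = [0..<2*l+1]"
proof -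
  define m where "m = 2*l+1"
  have "clockwise_listing l (standard_tuple l) ! s = s" if s: "s < m" for s
  proof -
    have "clockwise_listing l (standard_tuple l) ! s = (((2*s) mod m) * (l+1)) mod m"
      using clockwise_listing_nth[OF length_standard_tuple, of s] nth_standard_tuple s
      unfolding m_def by simp
    also have "\<dots> = ((2*s) * (l+1)) mod m" by (rule mod_mult_left_eq)
    also have "(2*s) * (l+1) = s + s * m" unfolding m_def by (simp add: algebra_simps)
    finally show ?thesis using s by simp
  qed
  moreover have "length (clockwise_listing l (standard_tuple l)) = m"
    unfolding clockwise_listing_def m_def by simp
  ultimately show ?thesis unfolding m_def[symmetric] by (intro nth_equalityI) simp_all
qed

lemma set_standard_tuple: "set (standard_tuple l) = {..<2*l+1}"
proof
  show "set (standard_tuple l) \<subseteq> {..<2*l+1}" unfolding standard_tuple_def by (auto simp del: upt_Suc)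
  note len = length_standard_tuple[of l]
  show "{..<2*l+1} \<subseteq> set (standard_tuple l)"
  proof
    fix s assume "s \<in> {..<2*l+1}"
    then have "s = standard_tuple l ! ((2*s) mod (2*l+1))" "(2*s) mod (2*l+1) < length (standard_tuple l)"
      using clockwise_listing_standard_tuple[of l] clockwise_listing_nth[OF len, of s] len
      by (auto simp del: upt_Suc)
    then show "s \<in> set (standard_tuple l)" by (metis nth_mem)
  qed
qed

lemma semi_valid_standard_tuple:
  assumes n: "2*l+1 \<le> n"
  shows "semi_valid n l (standard_tuple l)"
  unfolding semi_valid_iff cyc_ordered_def
proof (intro conjI exI)
  show len: "length (standard_tuple l) = 2*l+1" by (rule length_standard_tuple)
  show "distinct (standard_tuple l)" using set_standard_tuple len by (intro card_distinct) simp
  show "set (standard_tuple l) \<subseteq> {0..<n}"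
    unfolding set_standard_tuple using n by (simp add: lessThan_subset_iff atLeast0LessThan)
  show "sorted_wrt (<) (rotate 0 (clockwise_listing l (standard_tuple l)))"
    unfolding clockwise_listing_standard_tuple by (simp del: upt_Suc)
qed

lemma is_arc_standard_tuple:
  assumes n: "2*l+1 \<le> n"
  shows "is_arc n (2*l+1) (set (standard_tuple l))"
proof -
  have "{(0 + s) mod n | s. s < 2*l+1} = {..<2*l+1}" using n by (auto, rule_tac x=x in exI, simp)
  then show ?thesis unfolding is_arc_def set_standard_tuple by (intro exI[of _ 0]) (rule sym)
qed

lemma card_H_arc_le:
  assumes sv: "semi_valid n l C" "semi_valid n l C'" and arc: "is_arc n (2*l+1) (set C)"
    and r: "3 \<le> r"
  shows "card (H n r C) \<le> card (H n r C')"
  using weighted_heavy_count_le_arc[OF semi_valid_set[OF sv(2)] arc r]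
    card_H_add_weighted_heavy_count[OF sv(1), of r] card_H_add_weighted_heavy_count[OF sv(2), of r] r
  by linarith

lemma card_H_arc_less:
  assumes sv: "semi_valid n l C" "semi_valid n l C'" and arc: "is_arc n (2*l+1) (set C)"
    and not_arc: "\<not> is_arc n (2*l+1) (set C')" and r: "3 \<le> r" "3*r - 4 \<le> n" and l: "1 \<le> l"
  shows "card (H n r C) < card (H n r C')"
  using weighted_heavy_count_less_arc[OF semi_valid_set[OF sv(2)] not_arc arc r l]
    card_H_add_weighted_heavy_count[OF sv(1), of r] card_H_add_weighted_heavy_count[OF sv(2), of r] r
  by linarith

theorem corollary3p9:
  fixes n r l :: nat and C :: "nat list"
  assumes "r \<ge> 3" and "l \<ge> 1" and "n \<ge> 3*r - 4" and "n \<ge> 2*l + 1"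
    and "semi_valid n l C"
  shows "card (H n r C) = (LEAST m. \<exists>C'. semi_valid n l C' \<and> m = card (H n r C'))
         \<longleftrightarrow> (\<exists>i. consecutive n C i (2*l+1))"
proof -
  define C0 where "C0 = standard_tuple l"
  have C0: "semi_valid n l C0" "is_arc n (2*l+1) (set C0)"
    unfolding C0_def using semi_valid_standard_tuple is_arc_standard_tuple assms(4) by simp_all
  have "(LEAST m. \<exists>C'. semi_valid n l C' \<and> m = card (H n r C')) = card (H n r C0)"
    by (rule Least_equality) (use C0 card_H_arc_le assms(1) in blast)+
  moreover have "card (H n r C) = card (H n r C0) \<longleftrightarrow> is_arc n (2*l+1) (set C)"
    using card_H_arc_le[OF C0(1) assms(5) C0(2) assms(1)] card_H_arc_le[OF assms(5) C0(1) _ assms(1)]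
      card_H_arc_less[OF C0(1) assms(5) C0(2) _ assms(1,3,2)]
    by (cases "is_arc n (2*l+1) (set C)") auto
  ultimately show ?thesis using consecutive_iff_is_arc[OF assms(5)] by simp
qed

end
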